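(* Let $q$ be an odd prime power, let $\mathcal C$ be an irreducible conic of $\mathrm{PG}(2,q^2)$, let $\mathcal B$ be a Baer subplane of $\mathrm{PG}(2,q^2)$, and let $\mathcal E$ be the set of points of $\mathrm{PG}(2,q^2)$ external to $\mathcal C$. Then $|\mathcal E\cap\mathcal B|\geq\frac{q^2-3}{2}$.
   Context: A Baer subplane of $\mathrm{PG}(2,q^2)$ is a subplane of order $q$ (e.g. the canonically embedded $\mathrm{PG}(2,q)$). A point not on $\mathcal C$ is external to $\mathcal C$ if it lies on two tangent lines to $\mathcal C$. *)

theory Defs
  imports Complex_Main "HOL-Computational_Algebra.Primes"
begin

type_synonym 'a vec3 = "'a \<times> 'a \<times> 'a"

definition smul3 :: "'a::field \<Rightarrow> 'a vec3 \<Rightarrow> 'a vec3" where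
  "smul3 c v = (case v of (x, y, z) \<Rightarrow> (c * x, c * y, c * z))"

definition dot3 :: "'a::field vec3 \<Rightarrow> 'a vec3 \<Rightarrow> 'a" where
  "dot3 u v = (case u of (a, b, c) \<Rightarrow> case v of (x, y, z) \<Rightarrow> a * x + b * y + c * z)"

definition pt :: "'a::field vec3 \<Rightarrow> 'a vec3 set" where
  "pt v = {smul3 c v | c. c \<noteq> 0}"

definition pg_points :: "'a::field vec3 set set" where
  "pg_points = {pt v | v. v \<noteq> (0, 0, 0)}"

definition pg_line :: "'a::field vec3 \<Rightarrow> 'a vec3 set set" where
  "pg_line l = {pt v | v. v \<noteq> (0, 0, 0) \<and> dot3 l v = 0}"

definition pg_lines :: "'a::field vec3 set set set" where
  "pg_lines = {pg_line l | l. l \<noteq> (0, 0, 0)}"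

definition qform :: "'a::field \<times> 'a \<times> 'a \<times> 'a \<times> 'a \<times> 'a \<Rightarrow> 'a vec3 \<Rightarrow> 'a" where
  "qform k v = (case k of (a, b, c, d, e, f) \<Rightarrow> case v of (x, y, z) \<Rightarrow>
      a * x^2 + b * y^2 + c * z^2 + d * x * y + e * x * z + f * y * z)"

text \<open>Determinant of the (doubled) symmetric matrix of the form
  [[2a,d,e],[d,2b,f],[e,f,2c]]; in odd characteristic the conic is
  irreducible (non-degenerate) iff this is nonzero.\<close>

definition qdet :: "'a::field \<times> 'a \<times> 'a \<times> 'a \<times> 'a \<times> 'a \<Rightarrow> 'a" where
  "qdet k = (case k of (a, b, c, d, e, f) \<Rightarrow>
      2*a * (2*b * 2*c - f * f) - d * (d * 2*c - f * e) + e * (d * f - 2*b * e))"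

definition irreducible_conic :: "'a::field vec3 set set \<Rightarrow> bool" where
  "irreducible_conic C \<longleftrightarrow>
     (\<exists>k. qdet k \<noteq> 0 \<and> C = {pt v | v. v \<noteq> (0, 0, 0) \<and> qform k v = 0})"

definition tangent_line :: "'a::field vec3 set set \<Rightarrow> 'a vec3 set set \<Rightarrow> bool" where
  "tangent_line C l \<longleftrightarrow> l \<in> pg_lines \<and> card (l \<inter> C) = 1"

definition external_points :: "'a::field vec3 set set \<Rightarrow> 'a vec3 set set" where
  "external_points C = {P \<in> pg_points. P \<notin> C \<and>
      card {l. tangent_line C l \<and> P \<in> l} = 2}"

definition subplane_of_order :: "nat \<Rightarrow> 'a::field vec3 set set \<Rightarrow> bool" where
  "subplane_of_order n B \<longleftrightarrow>
     B \<subseteq> pg_points \<and>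
     (\<exists>Q \<subseteq> B. card Q = 4 \<and> (\<forall>l \<in> pg_lines. card (l \<inter> Q) \<le> 2)) \<and>
     (\<forall>l1 \<in> pg_lines. \<forall>l2 \<in> pg_lines. l1 \<noteq> l2 \<and> 2 \<le> card (l1 \<inter> B) \<and> 2 \<le> card (l2 \<inter> B)
         \<longrightarrow> l1 \<inter> l2 \<subseteq> B) \<and>
     (\<forall>l \<in> pg_lines. 2 \<le> card (l \<inter> B) \<longrightarrow> card (l \<inter> B) = n + 1)"

definition prime_power :: "nat \<Rightarrow> bool" where
  "prime_power q \<longleftrightarrow> (\<exists>p k. prime p \<and> 0 < k \<and> q = p ^ k)"

end

theory Submission
  imports Defs
begin

text \<open>Double count the incidences between the tangent lines of \<open>C\<close> and the points of \<open>B\<close>.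
  A point of \<open>C\<close> lies on exactly one tangent and a point off \<open>C\<close> on none or two, so there are
  at most \<open>|C \<inter> B| + 2 |E \<inter> B|\<close> incidences. On the other hand \<open>C\<close> has at least \<open>q\<^sup>2 + 1\<close>
  tangents, and each of them meets \<open>B\<close>, because every line of the plane meets a subplane of
  order \<open>q\<close>. If \<open>C\<close> contains at least five points of \<open>B\<close>, Pascal's theorem applied to five of
  them shows that the tangent at each point of \<open>C \<inter> B\<close> is a line of \<open>B\<close> and so contains a second
  point of \<open>B\<close>. Either way \<open>2 |E \<inter> B| \<ge> q\<^sup>2 - 3\<close>.

  Points, lines and conics are treated in homogeneous coordinates; the tangents of \<open>C\<close> are the
  polar lines of its points.\<close>

section \<open>Vectors in dimension three\<close>

abbreviation zero3 :: "'a::zero vec3" where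
  "zero3 \<equiv> (0, 0, 0)"

definition cross3 :: "'a::field vec3 \<Rightarrow> 'a vec3 \<Rightarrow> 'a vec3" where
  "cross3 u v = (case u of (a, b, c) \<Rightarrow> case v of (x, y, z) \<Rightarrow> (b*z - c*y, c*x - a*z, a*y - b*x))"

definition det3 :: "'a::field vec3 \<Rightarrow> 'a vec3 \<Rightarrow> 'a vec3 \<Rightarrow> 'a" where
  "det3 u v w = dot3 u (cross3 v w)"

definition lincomb2 :: "'a::field \<Rightarrow> 'a vec3 \<Rightarrow> 'a \<Rightarrow> 'a vec3 \<Rightarrow> 'a vec3" where
  "lincomb2 a u b v = (case u of (u1, u2, u3) \<Rightarrow> case v of (v1, v2, v3) \<Rightarrow>
     (a*u1 + b*v1, a*u2 + b*v2, a*u3 + b*v3))"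

definition lincomb3 :: "'a::field vec3 \<Rightarrow> 'a vec3 \<Rightarrow> 'a vec3 \<Rightarrow> 'a vec3 \<Rightarrow> 'a vec3" where
  "lincomb3 u v w c = (case c of (x, y, z) \<Rightarrow> case u of (u1, u2, u3) \<Rightarrow> case v of (v1, v2, v3) \<Rightarrow>
     case w of (w1, w2, w3) \<Rightarrow> (x*u1 + y*v1 + z*w1, x*u2 + y*v2 + z*w2, x*u3 + y*v3 + z*w3))"

lemma smul3_simp [simp]: "smul3 c (x, y, z) = (c*x, c*y, c*z)"
  by (simp add: smul3_def)

lemma dot3_simp [simp]: "dot3 (a, b, c) (x, y, z) = a*x + b*y + c*z"
  by (simp add: dot3_def)

lemma cross3_simp [simp]: "cross3 (a, b, c) (x, y, z) = (b*z - c*y, c*x - a*z, a*y - b*x)"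
  by (simp add: cross3_def)

lemma det3_simp [simp]:
  "det3 (a, b, c) (d, e, f) (x, y, z) = a*(e*z - f*y) + b*(f*x - d*z) + c*(d*y - e*x)"
  by (simp add: det3_def)

lemma lincomb2_simp [simp]:
  "lincomb2 r (a, b, c) s (x, y, z) = (r*a + s*x, r*b + s*y, r*c + s*z)"
  by (simp add: lincomb2_def)

lemma lincomb3_simp [simp]:
  "lincomb3 (a1, a2, a3) (b1, b2, b3) (c1, c2, c3) (x, y, z) =
     (x*a1 + y*b1 + z*c1, x*a2 + y*b2 + z*c2, x*a3 + y*b3 + z*c3)"
  by (simp add: lincomb3_def)

lemma smul3_eq_zero_iff [simp]: "smul3 c v = zero3 \<longleftrightarrow> c = 0 \<or> v = zero3"
  by (cases v) auto

lemma smul3_smul3 [simp]: "smul3 a (smul3 b v) = smul3 (a * b) v"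
  by (cases v) simp

lemma smul3_one [simp]: "smul3 1 v = v"
  by (cases v) simp

lemma dot3_commute: "dot3 u v = dot3 v u"
  by (cases u; cases v) (simp add: algebra_simps)

lemma dot3_smul3 [simp]: "dot3 l (smul3 c v) = c * dot3 l v"
  by (cases l; cases v) (simp add: algebra_simps)

lemma dot3_smul3_left [simp]: "dot3 (smul3 c l) v = c * dot3 l v"
  by (cases l; cases v) (simp add: algebra_simps)

lemma dot3_lincomb2 [simp]: "dot3 l (lincomb2 a u b v) = a * dot3 l u + b * dot3 l v"
  by (cases l; cases u; cases v) (simp add: algebra_simps)

lemma dot3_zero_left [simp]: "dot3 zero3 v = 0"
  by (cases v) simp

lemma dot3_cross3: "dot3 (cross3 u v) w = det3 u v w"
  by (cases u; cases v; cases w) (simp add: algebra_simps)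

lemma exists_dot3_nonzero:
  assumes "v \<noteq> zero3"
  obtains l :: "'a::field vec3" where "dot3 l v \<noteq> 0"
proof -
  obtain x y z where v: "v = (x, y, z)"
    by (cases v)
  with assms consider "x \<noteq> 0" | "y \<noteq> 0" | "z \<noteq> 0"
    by auto
  then show ?thesis
    using that[of "(1, 0, 0)"] that[of "(0, 1, 0)"] that[of "(0, 0, 1)"] by cases (simp_all add: v)
qed

lemma cross3_zero [simp]: "cross3 zero3 v = zero3" "cross3 v zero3 = zero3"
  by (cases v; simp)+

lemma cross3_self [simp]: "cross3 v v = zero3"
  by (cases v) (simp add: algebra_simps)

lemma cross3_smul3: "cross3 (smul3 a u) (smul3 b v) = smul3 (a * b) (cross3 u v)"
  by (cases u; cases v) (simp add: algebra_simps)

lemma cross3_smul3_self [simp]: "cross3 (smul3 c v) v = zero3" "cross3 v (smul3 c v) = zero3"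
  by (cases v; simp add: algebra_simps)+

lemma cross3_swap_eq_zero: "cross3 v u = zero3 \<longleftrightarrow> cross3 u v = zero3"
  by (cases u; cases v) (auto simp: algebra_simps)

lemma cross3_cross3: "cross3 (cross3 u v) l = lincomb2 (dot3 l u) v (- dot3 l v) u"
  by (cases u; cases v; cases l) (simp add: algebra_simps)

lemma cross3_eq_zero_iff:
  assumes "u \<noteq> zero3"
  shows "cross3 u v = zero3 \<longleftrightarrow> (\<exists>c. v = smul3 c u)"
proof
  assume "cross3 u v = zero3"
  moreover obtain a b c where u: "u = (a, b, c)" by (cases u)
  moreover obtain x y z where v: "v = (x, y, z)" by (cases v)
  ultimately have e: "b*z = c*y" "c*x = a*z" "a*y = b*x" by auto
  consider "a \<noteq> 0" | "a = 0" "b \<noteq> 0" | "a = 0" "b = 0" "c \<noteq> 0"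
    using assms u by auto
  then show "\<exists>c. v = smul3 c u"
  proof cases
    case 1
    then show ?thesis using e by (auto simp: u v field_simps intro!: exI[of _ "x/a"])
  next
    case 2
    then show ?thesis using e by (auto simp: u v field_simps intro!: exI[of _ "y/b"])
  next
    case 3
    then show ?thesis using e by (auto simp: u v field_simps intro!: exI[of _ "z/c"])
  qed
qed auto

lemma det3_repeated [simp]: "det3 u u v = 0" "det3 v u v = 0" "det3 u v v = 0"
  by (cases u; cases v; simp add: algebra_simps)+

lemma det3_zero_left [simp]: "det3 zero3 v w = 0"
  by (cases v; cases w) simp

lemma det3_smul3_left [simp]: "det3 (smul3 c u) v w = c * det3 u v w"
  by (cases u; cases v; cases w) (simp add: algebra_simps)

lemma det3_lincomb2_left: "det3 (lincomb2 a u b v) w z = a * det3 u w z + b * det3 v w z"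
  by (cases u; cases v; cases w; cases z) (simp add: algebra_simps)

lemma det3_rotate: "det3 a b c = det3 b c a"
  by (cases a; cases b; cases c) (simp add: algebra_simps)

lemma cross3_nonzero_if_det3_nonzero: "det3 a b c \<noteq> 0 \<Longrightarrow> cross3 a b \<noteq> zero3"
  by (auto simp: dot3_cross3[symmetric])

lemma cramer3:
  "smul3 (det3 a b c) d = lincomb3 a b c (det3 d b c, det3 a d c, det3 a b d)"
  by (cases a; cases b; cases c; cases d) (simp add: algebra_simps)

lemma cramer3_dual:
  "smul3 (det3 a b c) l =
     lincomb3 (cross3 b c) (cross3 c a) (cross3 a b) (dot3 l a, dot3 l b, dot3 l c)"
  by (cases a; cases b; cases c; cases l) (simp add: algebra_simps)

lemma det3_lincomb3:
  "det3 (lincomb3 a b c x) (lincomb3 a b c y) (lincomb3 a b c z) = det3 a b c * det3 x y z"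
  by (cases a; cases b; cases c; cases x; cases y; cases z) (simp add: algebra_simps)

lemma lincomb3_units [simp]:
  "lincomb3 a b c (1, 0, 0) = a" "lincomb3 a b c (0, 1, 0) = b" "lincomb3 a b c (0, 0, 1) = c"
  by (cases a; cases b; cases c; simp)+

lemma lincomb3_smul3: "lincomb3 a b c (smul3 s x) = smul3 s (lincomb3 a b c x)"
  by (cases a; cases b; cases c; cases x) (simp add: algebra_simps)

lemma lincomb3_zero [simp]: "lincomb3 a b c zero3 = zero3"
  by (cases a; cases b; cases c) simp

lemma lincomb3_third_zero: "lincomb3 a b c (x, y, 0) = lincomb2 x a y b"
  by (cases a; cases b; cases c) simp

lemma lincomb3_surj:
  assumes "det3 a b c \<noteq> 0"
  obtains x where "d = lincomb3 a b c x"
proof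
  have "smul3 (det3 a b c) d = lincomb3 a b c (det3 d b c, det3 a d c, det3 a b d)"
    by (rule cramer3)
  then have "smul3 (1 / det3 a b c) (smul3 (det3 a b c) d) =
      lincomb3 a b c (smul3 (1 / det3 a b c) (det3 d b c, det3 a d c, det3 a b d))"
    by (simp only: lincomb3_smul3)
  then show "d = lincomb3 a b c (smul3 (1 / det3 a b c) (det3 d b c, det3 a d c, det3 a b d))"
    using assms by (simp del: smul3_simp)
qed

lemma det3_eq_zero_if_orthogonal:
  assumes "l \<noteq> zero3" "dot3 l a = 0" "dot3 l b = 0" "dot3 l c = 0"
  shows "det3 a b c = 0"
  using cramer3_dual[of a b c l] assms by simp

lemma det3_eq_zero_imp_lincomb2:
  assumes "cross3 a b \<noteq> zero3" "det3 a b c = 0"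
  obtains \<alpha> \<beta> where "c = lincomb2 \<alpha> a \<beta> b"
proof -
  obtain e where e: "det3 a b e \<noteq> 0"
  proof -
    have "\<exists>e. det3 a b e \<noteq> 0"
    proof (rule ccontr)
      assume "\<not> ?thesis"
      then have "det3 a b (1, 0, 0) = 0" "det3 a b (0, 1, 0) = 0" "det3 a b (0, 0, 1) = 0"
        by auto
      with assms(1) show False
        by (cases a; cases b) (auto simp: algebra_simps)
    qed
    then show ?thesis using that by blast
  qed
  have "smul3 (det3 a b e) c = lincomb3 a b e (det3 c b e, det3 a c e, 0)"
    using cramer3[of a b e c] assms(2) by simp
  then have "smul3 (1 / det3 a b e) (smul3 (det3 a b e) c) =
      lincomb3 a b e (smul3 (1 / det3 a b e) (det3 c b e, det3 a c e, 0))"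
    by (simp only: lincomb3_smul3)
  then have "c = lincomb2 (det3 c b e / det3 a b e) a (det3 a c e / det3 a b e) b"
    using e by (simp add: lincomb3_third_zero)
  then show ?thesis using that by blast
qed

lemma orthogonal_pair_imp_parallel_cross3:
  assumes "dot3 l u = 0" "dot3 l w = 0" "cross3 u w \<noteq> zero3"
  obtains c where "l = smul3 c (cross3 u w)"
proof -
  have "cross3 (cross3 u w) l = zero3"
    using assms by (simp add: cross3_cross3 dot3_commute[of l]) (cases u; cases w; simp)
  with assms(3) show ?thesis
    using cross3_eq_zero_iff that by blast
qed

lemma orthogonal_pair_exists:
  assumes "l \<noteq> zero3"
  obtains u w where "dot3 l u = 0" "dot3 l w = 0" "cross3 u w \<noteq> zero3"
proof -
  obtain a b c where l: "l = (a, b, c)" by (cases l)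
  consider "a \<noteq> 0" | "a = 0" "b \<noteq> 0" | "a = 0" "b = 0"
    by auto
  then show ?thesis
  proof cases
    case 1
    then show ?thesis using that[of "(-b, a, 0)" "(-c, 0, a)"] by (simp add: l algebra_simps)
  next
    case 2
    then show ?thesis using that[of "(1, 0, 0)" "(0, -c, b)"] by (simp add: l)
  next
    case 3
    then show ?thesis using that[of "(1, 0, 0)" "(0, 1, 0)"] by (simp add: l)
  qed
qed

section \<open>The projective plane\<close>

lemma mem_pt: "w \<in> pt v \<longleftrightarrow> (\<exists>c. c \<noteq> 0 \<and> w = smul3 c v)"
  by (auto simp: pt_def)

lemma pt_self: "v \<in> pt v"
  unfolding mem_pt by (rule exI[of _ 1]) simp

lemma pt_smul3:
  assumes "c \<noteq> 0"
  shows "pt (smul3 c v) = pt v"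
proof (intro set_eqI iffI)
  fix w
  assume "w \<in> pt (smul3 c v)"
  then obtain d where "d \<noteq> 0" "w = smul3 (d * c) v"
    by (auto simp: mem_pt)
  then show "w \<in> pt v"
    using assms unfolding mem_pt by (intro exI[of _ "d * c"]) simp
next
  fix w
  assume "w \<in> pt v"
  then obtain d where "d \<noteq> 0" "w = smul3 d v"
    by (auto simp: mem_pt)
  then show "w \<in> pt (smul3 c v)"
    using assms unfolding mem_pt by (intro exI[of _ "d / c"]) simp
qed

lemma pt_eq_iff:
  assumes "v \<noteq> zero3" "w \<noteq> zero3"
  shows "pt v = pt w \<longleftrightarrow> cross3 v w = zero3"
proof
  assume "pt v = pt w"
  then have "v \<in> pt w"
    using pt_self by metis
  then show "cross3 v w = zero3"
    by (auto simp: mem_pt)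
next
  assume "cross3 v w = zero3"
  then obtain c where c: "v = smul3 c w"
    using cross3_eq_zero_iff cross3_swap_eq_zero assms(2) by blast
  with assms(1) have "c \<noteq> 0"
    by auto
  with c show "pt v = pt w"
    by (simp add: pt_smul3)
qed

lemma pt_in_pg_points: "v \<noteq> zero3 \<Longrightarrow> pt v \<in> pg_points"
  unfolding pg_points_def by blast

lemma pg_pointsE:
  assumes "P \<in> pg_points"
  obtains v where "v \<noteq> zero3" "P = pt v"
  using assms by (auto simp: pg_points_def)

definition rep :: "'a::field vec3 set \<Rightarrow> 'a vec3" where
  "rep P = (SOME v. v \<noteq> zero3 \<and> P = pt v)"

lemma rep:
  assumes "P \<in> pg_points"
  shows "rep P \<noteq> zero3" "pt (rep P) = P"
proof -
  have "\<exists>v. v \<noteq> zero3 \<and> P = pt v"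
    using assms pg_pointsE by metis
  then have "rep P \<noteq> zero3 \<and> P = pt (rep P)"
    unfolding rep_def by (rule someI_ex)
  then show "rep P \<noteq> zero3" "pt (rep P) = P"
    by simp_all
qed

lemma pt_in_pg_line_iff:
  assumes "v \<noteq> zero3"
  shows "pt v \<in> pg_line l \<longleftrightarrow> dot3 l v = 0"
proof
  assume "pt v \<in> pg_line l"
  then obtain w where w: "pt v = pt w" "dot3 l w = 0"
    by (auto simp: pg_line_def)
  then have "v \<in> pt w"
    using pt_self by metis
  with w(2) show "dot3 l v = 0"
    by (auto simp: mem_pt)
qed (use assms in \<open>unfold pg_line_def, blast\<close>)

lemma pg_lineE:
  assumes "P \<in> pg_line l"
  obtains v where "v \<noteq> zero3" "P = pt v" "dot3 l v = 0"
  using assms by (auto simp: pg_line_def)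

lemma pg_linesE:
  assumes "L \<in> pg_lines"
  obtains l where "l \<noteq> zero3" "L = pg_line l"
  using assms by (auto simp: pg_lines_def)

lemma pg_line_subset_pg_points: "pg_line l \<subseteq> pg_points"
  by (auto simp: pg_line_def pg_points_def)

lemma rep_pg_line:
  assumes "P \<in> pg_line l"
  shows "rep P \<noteq> zero3" "dot3 l (rep P) = 0"
proof -
  have "P \<in> pg_points"
    using assms pg_line_subset_pg_points by blast
  then show "rep P \<noteq> zero3" "dot3 l (rep P) = 0"
    using assms rep pt_in_pg_line_iff by metis+
qed

lemma pg_line_in_pg_lines: "l \<noteq> zero3 \<Longrightarrow> pg_line l \<in> pg_lines"
  unfolding pg_lines_def by blast

lemma pg_line_smul3: "c \<noteq> 0 \<Longrightarrow> pg_line (smul3 c l) = pg_line l"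
  by (simp add: pg_line_def)

lemma cross3_affine_param:
  "cross3 (lincomb2 1 u s w) (lincomb2 1 u t w) = smul3 (t - s) (cross3 u w)"
  "cross3 (lincomb2 1 u t w) w = cross3 u w"
  by (cases u; cases w; simp add: algebra_simps)+

lemma affine_param_inj:
  assumes "cross3 u w \<noteq> zero3"
  shows "inj (\<lambda>t. pt (lincomb2 1 u t w))" "pt w \<notin> range (\<lambda>t. pt (lincomb2 1 u t w))"
proof -
  have "w \<noteq> zero3" "lincomb2 1 u t w \<noteq> zero3" for t
    using assms cross3_affine_param(2)[of u t w] by auto
  then show "inj (\<lambda>t. pt (lincomb2 1 u t w))" "pt w \<notin> range (\<lambda>t. pt (lincomb2 1 u t w))"
    using assms by (auto intro!: injI simp: pt_eq_iff cross3_affine_param cross3_swap_eq_zero[of w])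
qed

lemma pg_line_eq_affine_param:
  assumes "l \<noteq> zero3" "dot3 l u = 0" "dot3 l w = 0" "cross3 u w \<noteq> zero3"
  shows "pg_line l = insert (pt w) (range (\<lambda>t. pt (lincomb2 1 u t w)))"
proof
  have "w \<noteq> zero3" "lincomb2 1 u t w \<noteq> zero3" for t
    using assms(4) cross3_affine_param(2)[of u t w] by auto
  with assms show "insert (pt w) (range (\<lambda>t. pt (lincomb2 1 u t w))) \<subseteq> pg_line l"
    by (auto simp: pt_in_pg_line_iff)
  show "pg_line l \<subseteq> insert (pt w) (range (\<lambda>t. pt (lincomb2 1 u t w)))"
  proof
    fix P
    assume "P \<in> pg_line l"
    then obtain v where v: "v \<noteq> zero3" "P = pt v" "dot3 l v = 0"
      by (rule pg_lineE)
    then have "det3 u w v = 0"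
      using det3_eq_zero_if_orthogonal assms by blast
    then obtain \<alpha> \<beta> where v_eq: "v = lincomb2 \<alpha> u \<beta> w"
      using det3_eq_zero_imp_lincomb2 assms(4) by blast
    show "P \<in> insert (pt w) (range (\<lambda>t. pt (lincomb2 1 u t w)))"
    proof (cases "\<alpha> = 0")
      case True
      then have "v = smul3 \<beta> w"
        using v_eq by (cases u; cases w) simp
      with v show ?thesis
        by (auto simp: pt_smul3)
    next
      case False
      then have "v = smul3 \<alpha> (lincomb2 1 u (\<beta> / \<alpha>) w)"
        using v_eq by (cases u; cases w) (simp add: field_simps)
      with v False show ?thesis
        by (simp add: pt_smul3)
    qed
  qed
qed

lemma card_pg_line:
  fixes l :: "'a::{field,finite} vec3"
  assumes "l \<noteq> zero3"
  shows "card (pg_line l) = card (UNIV :: 'a set) + 1"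
proof -
  obtain u w where uw: "dot3 l u = 0" "dot3 l w = 0" "cross3 u w \<noteq> zero3"
    using orthogonal_pair_exists assms by blast
  show ?thesis
    unfolding pg_line_eq_affine_param[OF assms uw] using affine_param_inj[OF uw(3)]
    by (simp add: card_image)
qed

lemma pg_line_eq_iff:
  assumes "l1 \<noteq> zero3" "l2 \<noteq> zero3"
  shows "pg_line l1 = pg_line l2 \<longleftrightarrow> cross3 l1 l2 = zero3"
proof
  assume eq: "pg_line l1 = pg_line l2"
  obtain u w where uw: "dot3 l1 u = 0" "dot3 l1 w = 0" "cross3 u w \<noteq> zero3"
    using orthogonal_pair_exists assms(1) by blast
  then have "u \<noteq> zero3" "w \<noteq> zero3"
    by auto
  with eq uw have "dot3 l2 u = 0" "dot3 l2 w = 0"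
    using pt_in_pg_line_iff by metis+
  then obtain c2 where "l2 = smul3 c2 (cross3 u w)"
    using orthogonal_pair_imp_parallel_cross3 uw(3) by blast
  moreover obtain c1 where "l1 = smul3 c1 (cross3 u w)"
    using orthogonal_pair_imp_parallel_cross3 uw by blast
  ultimately show "cross3 l1 l2 = zero3"
    by (simp add: cross3_smul3)
next
  assume "cross3 l1 l2 = zero3"
  then obtain c where c: "l1 = smul3 c l2"
    using cross3_eq_zero_iff cross3_swap_eq_zero assms(2) by blast
  with assms(1) have "c \<noteq> 0"
    by auto
  with c show "pg_line l1 = pg_line l2"
    by (simp add: pg_line_smul3 del: smul3_simp)
qed

lemma pg_line_eq_cross3:
  assumes "l \<noteq> zero3" "dot3 l v = 0" "dot3 l w = 0" "cross3 v w \<noteq> zero3"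
  shows "pg_line l = pg_line (cross3 v w)"
proof -
  obtain c where "l = smul3 c (cross3 v w)"
    using orthogonal_pair_imp_parallel_cross3 assms(2-4) by blast
  with assms(1,4) show ?thesis
    by (simp add: pg_line_eq_iff)
qed

lemma pt_in_pg_line_cross3:
  assumes "cross3 v w \<noteq> zero3"
  shows "pt v \<in> pg_line (cross3 v w)" "pt w \<in> pg_line (cross3 v w)"
proof -
  have "v \<noteq> zero3" "w \<noteq> zero3"
    using assms by auto
  then show "pt v \<in> pg_line (cross3 v w)" "pt w \<in> pg_line (cross3 v w)"
    by (simp_all add: pt_in_pg_line_iff dot3_cross3)
qed

lemma pg_lines_unique:
  assumes "L1 \<in> pg_lines" "L2 \<in> pg_lines" "P \<in> L1" "P \<in> L2" "R \<in> L1" "R \<in> L2" "P \<noteq> R"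
  shows "L1 = L2"
proof -
  obtain l1 where l1: "l1 \<noteq> zero3" "L1 = pg_line l1"
    using assms(1) by (rule pg_linesE)
  obtain l2 where l2: "l2 \<noteq> zero3" "L2 = pg_line l2"
    using assms(2) by (rule pg_linesE)
  obtain v where v: "v \<noteq> zero3" "P = pt v" "dot3 l1 v = 0"
    using assms(3) unfolding l1(2) by (rule pg_lineE)
  obtain w where w: "w \<noteq> zero3" "R = pt w" "dot3 l1 w = 0"
    using assms(5) unfolding l1(2) by (rule pg_lineE)
  have "dot3 l2 v = 0" "dot3 l2 w = 0"
    using assms(4,6) l2 v w pt_in_pg_line_iff by metis+
  moreover have "cross3 v w \<noteq> zero3"
    using pt_eq_iff v w assms(7) by metis
  ultimately show ?thesis
    using pg_line_eq_cross3 l1 l2 v w by metis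
qed

lemma pg_lines_meet:
  assumes "L1 \<in> pg_lines" "L2 \<in> pg_lines"
  shows "L1 \<inter> L2 \<noteq> {}"
proof -
  obtain l1 where l1: "l1 \<noteq> zero3" "L1 = pg_line l1"
    using assms(1) by (rule pg_linesE)
  obtain l2 where l2: "l2 \<noteq> zero3" "L2 = pg_line l2"
    using assms(2) by (rule pg_linesE)
  show ?thesis
  proof (cases "cross3 l1 l2 = zero3")
    case True
    obtain u w where "dot3 l1 u = 0" "cross3 u w \<noteq> zero3"
      using orthogonal_pair_exists l1(1) by metis
    moreover have "u \<noteq> zero3"
      using \<open>cross3 u w \<noteq> zero3\<close> by auto
    ultimately have "pt u \<in> L1"
      using l1 by (simp add: pt_in_pg_line_iff)
    moreover have "L1 = L2"
      using True l1 l2 pg_line_eq_iff by metis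
    ultimately show ?thesis
      by blast
  next
    case False
    then have "pt (cross3 l1 l2) \<in> L1 \<inter> L2"
      using l1 l2 by (simp add: pt_in_pg_line_iff dot3_commute[of l1] dot3_commute[of l2] dot3_cross3)
    then show ?thesis
      by blast
  qed
qed

definition pg_join :: "'a::field vec3 set \<Rightarrow> 'a vec3 set \<Rightarrow> 'a vec3 set set" where
  "pg_join P R = pg_line (cross3 (rep P) (rep R))"

lemma pg_join:
  assumes "P \<in> pg_points" "R \<in> pg_points" "P \<noteq> R"
  shows "pg_join P R \<in> pg_lines" "P \<in> pg_join P R" "R \<in> pg_join P R"
proof -
  have c: "cross3 (rep P) (rep R) \<noteq> zero3"
    using assms rep pt_eq_iff by metis
  then show "pg_join P R \<in> pg_lines"
    unfolding pg_join_def by (rule pg_line_in_pg_lines)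
  show "P \<in> pg_join P R" "R \<in> pg_join P R"
    using pt_in_pg_line_cross3[OF c] unfolding pg_join_def rep(2)[OF assms(1)] rep(2)[OF assms(2)] .
qed

lemma exists_orthogonal_not_parallel:
  assumes "l \<noteq> zero3" "r \<noteq> zero3"
  obtains s where "dot3 l s = 0" "cross3 r s \<noteq> zero3"
proof -
  obtain u w where uw: "dot3 l u = 0" "dot3 l w = 0" "cross3 u w \<noteq> zero3"
    using orthogonal_pair_exists assms(1) by blast
  then have "u \<noteq> zero3" "w \<noteq> zero3"
    by auto
  have "cross3 r u \<noteq> zero3 \<or> cross3 r w \<noteq> zero3"
  proof (rule ccontr)
    assume "\<not> ?thesis"
    then have "pt u = pt w"
      using pt_eq_iff assms(2) \<open>u \<noteq> zero3\<close> \<open>w \<noteq> zero3\<close> by metis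
    with uw(3) show False
      using pt_eq_iff \<open>u \<noteq> zero3\<close> \<open>w \<noteq> zero3\<close> by metis
  qed
  with uw that show ?thesis
    by blast
qed

section \<open>Conics and their polarity\<close>

type_synonym 'a conic_coeffs = "'a \<times> 'a \<times> 'a \<times> 'a \<times> 'a \<times> 'a"

definition conic_points :: "'a::field conic_coeffs \<Rightarrow> 'a vec3 set set" where
  "conic_points k = {pt v | v. v \<noteq> zero3 \<and> qform k v = 0}"

text \<open>\<open>polar_vec k v\<close> is \<open>M v\<close> for the matrix \<open>M\<close> whose determinant is \<open>qdet k\<close>.\<close>

definition polar_vec :: "'a::field conic_coeffs \<Rightarrow> 'a vec3 \<Rightarrow> 'a vec3" where
  "polar_vec k v = (case k of (a, b, c, d, e, f) \<Rightarrow> case v of (x, y, z) \<Rightarrow>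
     (2*a*x + d*y + e*z, d*x + 2*b*y + f*z, e*x + f*y + 2*c*z))"

definition polar_form :: "'a::field conic_coeffs \<Rightarrow> 'a vec3 \<Rightarrow> 'a vec3 \<Rightarrow> 'a" where
  "polar_form k u v = dot3 u (polar_vec k v)"

text \<open>If \<open>r\<close> is a point of the conic, the line through \<open>r\<close> and \<open>s\<close> meets the conic again in
  \<open>second_intersection k r s\<close>; this is \<open>r\<close> itself when the line is tangent.\<close>

definition second_intersection ::
    "'a::field conic_coeffs \<Rightarrow> 'a vec3 \<Rightarrow> 'a vec3 \<Rightarrow> 'a vec3" where
  "second_intersection k r s = lincomb2 (qform k s) r (- polar_form k r s) s"

lemma polar_vec_simp [simp]:
  "polar_vec (a, b, c, d, e, f) (x, y, z) =
     (2*a*x + d*y + e*z, d*x + 2*b*y + f*z, e*x + f*y + 2*c*z)"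
  by (simp add: polar_vec_def)

lemma qform_simp [simp]:
  "qform (a, b, c, d, e, f) (x, y, z) = a*x^2 + b*y^2 + c*z^2 + d*x*y + e*x*z + f*y*z"
  by (simp add: qform_def)

lemma qdet_simp [simp]:
  "qdet (a, b, c, d, e, f) = 2*a * (2*b * 2*c - f*f) - d * (d * 2*c - f*e) + e * (d*f - 2*b*e)"
  by (simp add: qdet_def)

lemma dot3_polar_vec: "dot3 (polar_vec k u) v = polar_form k u v"
  unfolding polar_form_def by (cases k rule: prod_cases6; cases u; cases v) (simp add: algebra_simps)

lemma polar_form_commute: "polar_form k u v = polar_form k v u"
  unfolding polar_form_def by (cases k rule: prod_cases6; cases u; cases v) (simp add: algebra_simps)

lemma polar_form_diag: "polar_form k v v = 2 * qform k v"
  unfolding polar_form_def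
  by (cases k rule: prod_cases6; cases v) (simp add: algebra_simps power2_eq_square)

lemma polar_form_smul3: "polar_form k u (smul3 c v) = c * polar_form k u v"
  unfolding polar_form_def by (cases k rule: prod_cases6; cases u; cases v) (simp add: algebra_simps)

lemma polar_form_zero [simp]: "polar_form k u zero3 = 0"
  unfolding polar_form_def by (cases k rule: prod_cases6; cases u) simp

lemma polar_form_lincomb3:
  "polar_form k u (lincomb3 p1 p2 p3 (x, y, z)) =
     x * polar_form k u p1 + y * polar_form k u p2 + z * polar_form k u p3"
  unfolding polar_form_def
  by (cases k rule: prod_cases6; cases u; cases p1; cases p2; cases p3) (simp add: algebra_simps)

lemma qform_smul3 [simp]: "qform k (smul3 c v) = c^2 * qform k v"
  by (cases k rule: prod_cases6; cases v) (simp add: algebra_simps power2_eq_square)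

lemma qform_lincomb2:
  "qform k (lincomb2 a u b v) = a^2 * qform k u + a * b * polar_form k u v + b^2 * qform k v"
  unfolding polar_form_def
  by (cases k rule: prod_cases6; cases u; cases v) (simp add: algebra_simps power2_eq_square)

lemma qform_lincomb3:
  "qform k (lincomb3 p1 p2 p3 (x, y, z)) =
     x^2 * qform k p1 + y^2 * qform k p2 + z^2 * qform k p3
     + x * y * polar_form k p1 p2 + x * z * polar_form k p1 p3 + y * z * polar_form k p2 p3"
  unfolding polar_form_def
  by (cases k rule: prod_cases6; cases p1; cases p2; cases p3) (simp add: algebra_simps power2_eq_square)

lemma polar_vec_smul3: "polar_vec k (smul3 c v) = smul3 c (polar_vec k v)"
  by (cases k rule: prod_cases6; cases v) (simp add: algebra_simps)

lemma polar_vec_cross3: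
  "polar_vec k (cross3 (polar_vec k r) (polar_vec k s)) = smul3 (qdet k) (cross3 r s)"
  by (cases k rule: prod_cases6; cases r; cases s) (simp add: algebra_simps)

lemma polar_vec_zero [simp]: "polar_vec k zero3 = zero3"
  by (cases k rule: prod_cases6) simp

lemma qform_second_intersection:
  assumes "qform k r = 0"
  shows "qform k (second_intersection k r s) = 0"
  using assms unfolding second_intersection_def qform_lincomb2
  by (simp add: algebra_simps power2_eq_square)

lemma cross3_second_intersection:
  "cross3 r (second_intersection k r s) = smul3 (- polar_form k r s) (cross3 r s)"
  unfolding second_intersection_def by (cases r; cases s) (simp add: algebra_simps)

lemma det3_second_intersection:
  "det3 (second_intersection k r s) r t = - polar_form k r s * det3 s r t"
  unfolding second_intersection_def det3_lincomb2_left by simp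

lemma mem_conic_points_iff:
  assumes "v \<noteq> zero3"
  shows "pt v \<in> conic_points k \<longleftrightarrow> qform k v = 0"
proof
  assume "pt v \<in> conic_points k"
  then obtain w where w: "pt v = pt w" "qform k w = 0"
    by (auto simp: conic_points_def)
  then have "v \<in> pt w"
    using pt_self by metis
  with w(2) show "qform k v = 0"
    by (auto simp: mem_pt)
qed (use assms in \<open>unfold conic_points_def, blast\<close>)

lemma conic_pointsE:
  assumes "P \<in> conic_points k"
  obtains v where "v \<noteq> zero3" "P = pt v" "qform k v = 0"
  using assms by (auto simp: conic_points_def)

lemma conic_points_subset_pg_points: "conic_points k \<subseteq> pg_points"
  by (auto simp: conic_points_def pg_points_def)

lemma second_conic_point_on_line:
  assumes "qform k r = 0" "dot3 l r = 0" "dot3 l s = 0" "cross3 r s \<noteq> zero3"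
    and "polar_form k r s \<noteq> 0"
  shows "pt (second_intersection k r s) \<in> pg_line l \<inter> conic_points k"
    and "pt (second_intersection k r s) \<noteq> pt r"
proof -
  have "cross3 r (second_intersection k r s) \<noteq> zero3"
    using assms(4,5) by (simp add: cross3_second_intersection)
  then have "second_intersection k r s \<noteq> zero3" "r \<noteq> zero3"
    by auto
  moreover have "qform k (second_intersection k r s) = 0"
    using assms(1) by (rule qform_second_intersection)
  moreover have "dot3 l (second_intersection k r s) = 0"
    unfolding second_intersection_def using assms(2,3) by simp
  ultimately show "pt (second_intersection k r s) \<in> pg_line l \<inter> conic_points k"
    by (simp add: pt_in_pg_line_iff mem_conic_points_iff)
  show "pt (second_intersection k r s) \<noteq> pt r"
    using \<open>cross3 r (second_intersection k r s) \<noteq> zero3\<close> \<open>second_intersection k r s \<noteq> zero3\<close> \<open>r \<noteq> zero3\<close>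
    by (simp add: pt_eq_iff cross3_swap_eq_zero[of "second_intersection k r s"])
qed

locale conic =
  fixes k :: "'a::field conic_coeffs"
  assumes qdet_nonzero: "qdet k \<noteq> 0"
begin

abbreviation C :: "'a vec3 set set" where
  "C \<equiv> conic_points k"

lemma two_nonzero: "(2::'a) \<noteq> 0"
proof
  assume "(2::'a) = 0"
  moreover obtain a b c d e f where "k = (a, b, c, d, e, f)"
    by (cases k rule: prod_cases6)
  ultimately have "qdet k = 0"
    by (simp add: algebra_simps)
  with qdet_nonzero show False ..
qed

lemma polar_vec_eq_zero_iff [simp]: "polar_vec k v = zero3 \<longleftrightarrow> v = zero3"
proof
  assume Mv: "polar_vec k v = zero3"
  obtain a b c d e f where k: "k = (a, b, c, d, e, f)"
    by (cases k rule: prod_cases6)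
  \<comment> \<open>multiplication by the adjugate of the matrix of the form\<close>
  have "smul3 (qdet k) v = (case polar_vec k v of (X, Y, Z) \<Rightarrow>
     ((4*b*c - f*f)*X + (e*f - 2*c*d)*Y + (d*f - 2*b*e)*Z,
      (e*f - 2*c*d)*X + (4*a*c - e*e)*Y + (d*e - 2*a*f)*Z,
      (d*f - 2*b*e)*X + (d*e - 2*a*f)*Y + (4*a*b - d*d)*Z))"
    unfolding k by (cases v) (simp add: algebra_simps)
  with Mv have "smul3 (qdet k) v = zero3"
    by simp
  with qdet_nonzero show "v = zero3"
    by simp
qed simp

lemma polar_vec_cross3_eq_zeroD:
  assumes "cross3 (polar_vec k r) (polar_vec k s) = zero3"
  shows "cross3 r s = zero3"
proof -
  have "smul3 (qdet k) (cross3 r s) = zero3"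
    using polar_vec_cross3[of k r s] assms by (simp del: smul3_simp)
  with qdet_nonzero show ?thesis
    by simp
qed

lemma isotropic_orthogonal_imp_parallel:
  assumes "qform k r = 0" "qform k s = 0" "polar_form k r s = 0"
  shows "cross3 r s = zero3"
proof (rule ccontr)
  assume rs: "cross3 r s \<noteq> zero3"
  have "dot3 (polar_vec k r) r = 0" "dot3 (polar_vec k r) s = 0"
       "dot3 (polar_vec k s) r = 0" "dot3 (polar_vec k s) s = 0"
    using assms by (simp_all add: dot3_polar_vec polar_form_diag polar_form_commute[of k s r])
  then obtain \<alpha> \<beta> where "polar_vec k r = smul3 \<alpha> (cross3 r s)" "polar_vec k s = smul3 \<beta> (cross3 r s)"
    using orthogonal_pair_imp_parallel_cross3 rs by metis
  then have "cross3 (polar_vec k r) (polar_vec k s) = zero3"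
    by (simp add: cross3_smul3 del: smul3_simp)
  with rs show False
    using polar_vec_cross3_eq_zeroD by blast
qed

lemma det3_conic_points_nonzero:
  assumes "qform k a = 0" "qform k b = 0" "qform k c = 0"
    and "cross3 a b \<noteq> zero3" "cross3 a c \<noteq> zero3" "cross3 b c \<noteq> zero3"
  shows "det3 a b c \<noteq> 0"
proof
  assume "det3 a b c = 0"
  then obtain \<alpha> \<beta> where c: "c = lincomb2 \<alpha> a \<beta> b"
    using det3_eq_zero_imp_lincomb2 assms(4) by blast
  have "\<alpha> \<noteq> 0"
    using assms(6) c by (cases a; cases b) (auto simp: algebra_simps)
  moreover have "\<beta> \<noteq> 0"
    using assms(5) c by (cases a; cases b) (auto simp: algebra_simps)
  moreover have "\<alpha> * \<beta> * polar_form k a b = 0"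
    using assms(1-3) c by (simp add: qform_lincomb2)
  ultimately have "polar_form k a b = 0"
    by simp
  with assms(1,2,4) show False
    using isotropic_orthogonal_imp_parallel by blast
qed

lemma card_pg_line_inter_conic_le:
  assumes "L \<in> pg_lines"
  shows "card (L \<inter> C) \<le> 2"
proof (rule ccontr)
  assume "\<not> ?thesis"
  then have "3 \<le> card (L \<inter> C)"
    by simp
  then obtain S where S: "S \<subseteq> L \<inter> C" "card S = 3"
    by (rule obtain_subset_with_card_n)
  then obtain P R X where "S = {P, R, X}" "P \<noteq> R" "R \<noteq> X" "P \<noteq> X"
    unfolding card_3_iff by blast
  with S(1) have PRX: "P \<in> L \<inter> C" "R \<in> L \<inter> C" "X \<in> L \<inter> C" "P \<noteq> R" "R \<noteq> X" "P \<noteq> X"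
    by blast+
  obtain l where l: "l \<noteq> zero3" "L = pg_line l"
    using assms by (rule pg_linesE)
  obtain a where a: "a \<noteq> zero3" "P = pt a" "qform k a = 0"
    using PRX(1) conic_pointsE by blast
  obtain b where b: "b \<noteq> zero3" "R = pt b" "qform k b = 0"
    using PRX(2) conic_pointsE by blast
  obtain c where c: "c \<noteq> zero3" "X = pt c" "qform k c = 0"
    using PRX(3) conic_pointsE by blast
  have "dot3 l a = 0" "dot3 l b = 0" "dot3 l c = 0"
    using PRX(1-3) a b c l by (simp_all add: pt_in_pg_line_iff)
  then have "det3 a b c = 0"
    using det3_eq_zero_if_orthogonal l(1) by blast
  moreover have "cross3 a b \<noteq> zero3" "cross3 a c \<noteq> zero3" "cross3 b c \<noteq> zero3"
    using PRX(4-6) a b c by (simp_all add: pt_eq_iff[symmetric])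
  ultimately show False
    using det3_conic_points_nonzero a b c by blast
qed

lemma polar_line_inter_conic:
  assumes "r \<noteq> zero3" "qform k r = 0"
  shows "pg_line (polar_vec k r) \<inter> C = {pt r}"
proof
  show "{pt r} \<subseteq> pg_line (polar_vec k r) \<inter> C"
    using assms by (simp add: pt_in_pg_line_iff dot3_polar_vec polar_form_diag mem_conic_points_iff)
  show "pg_line (polar_vec k r) \<inter> C \<subseteq> {pt r}"
  proof
    fix P
    assume P: "P \<in> pg_line (polar_vec k r) \<inter> C"
    then obtain s where s: "s \<noteq> zero3" "P = pt s" "qform k s = 0"
      by (blast elim: conic_pointsE)
    with P have "polar_form k r s = 0"
      by (simp add: pt_in_pg_line_iff dot3_polar_vec)
    then have "pt r = pt s"
      using isotropic_orthogonal_imp_parallel assms s by (simp add: pt_eq_iff)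
    then show "P \<in> {pt r}"
      using s(2) by simp
  qed
qed

lemma tangent_eq_polar_line:
  assumes "L \<in> pg_lines" "L \<inter> C = {pt r}" "r \<noteq> zero3"
  shows "L = pg_line (polar_vec k r)"
proof -
  obtain l where l: "l \<noteq> zero3" "L = pg_line l"
    using assms(1) by (rule pg_linesE)
  have "pt r \<in> C" "pt r \<in> pg_line l"
    using assms(2) l(2) by blast+
  then have r: "qform k r = 0" "dot3 l r = 0"
    using assms(3) by (simp_all add: mem_conic_points_iff pt_in_pg_line_iff)
  obtain s where s: "dot3 l s = 0" "cross3 r s \<noteq> zero3"
    using exists_orthogonal_not_parallel l(1) assms(3) by blast
  then have "s \<noteq> zero3"
    by auto
  have "polar_form k r s = 0"
    using second_conic_point_on_line[OF r s] assms(2) l(2) by blast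
  then have on_polar: "pt r \<in> pg_line (polar_vec k r)" "pt s \<in> pg_line (polar_vec k r)"
    using r(1) assms(3) \<open>s \<noteq> zero3\<close>
    by (simp_all add: pt_in_pg_line_iff dot3_polar_vec polar_form_diag)
  have on_L: "pt r \<in> L" "pt s \<in> L"
    using l r(2) s(1) assms(3) \<open>s \<noteq> zero3\<close> by (simp_all add: pt_in_pg_line_iff)
  have "pt r \<noteq> pt s"
    using s(2) assms(3) \<open>s \<noteq> zero3\<close> by (simp add: pt_eq_iff)
  moreover have "pg_line (polar_vec k r) \<in> pg_lines"
    using assms(3) by (simp add: pg_line_in_pg_lines)
  ultimately show ?thesis
    using pg_lines_unique[OF assms(1) _ on_L(1) on_polar(1) on_L(2) on_polar(2)] by blast
qed

definition polar :: "'a vec3 set \<Rightarrow> 'a vec3 set set" where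
  "polar P = pg_line (polar_vec k (rep P))"

lemma polar_pt:
  assumes "v \<noteq> zero3"
  shows "polar (pt v) = pg_line (polar_vec k v)"
proof -
  have w: "rep (pt v) \<noteq> zero3" "pt (rep (pt v)) = pt v"
    using rep assms pt_in_pg_points by blast+
  then have "cross3 v (rep (pt v)) = zero3"
    using pt_eq_iff assms cross3_swap_eq_zero by metis
  then obtain c where c: "rep (pt v) = smul3 c v"
    using cross3_eq_zero_iff assms by blast
  with w(1) have "c \<noteq> 0"
    by auto
  with c show ?thesis
    unfolding polar_def by (simp add: polar_vec_smul3 pg_line_smul3 del: smul3_simp)
qed

lemma polar_in_pg_lines: "P \<in> pg_points \<Longrightarrow> polar P \<in> pg_lines"
  by (metis pg_pointsE polar_pt polar_vec_eq_zero_iff pg_line_in_pg_lines)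

lemma inj_on_polar: "inj_on polar pg_points"
proof (rule inj_onI)
  fix P R
  assume "P \<in> pg_points" "R \<in> pg_points" "polar P = polar R"
  moreover obtain v where v: "v \<noteq> zero3" "P = pt v"
    using \<open>P \<in> pg_points\<close> by (rule pg_pointsE)
  moreover obtain w where w: "w \<noteq> zero3" "R = pt w"
    using \<open>R \<in> pg_points\<close> by (rule pg_pointsE)
  ultimately have "pg_line (polar_vec k v) = pg_line (polar_vec k w)"
    by (simp add: polar_pt)
  then have "cross3 (polar_vec k v) (polar_vec k w) = zero3"
    using pg_line_eq_iff v w polar_vec_eq_zero_iff by blast
  then show "P = R"
    using polar_vec_cross3_eq_zeroD pt_eq_iff v w by metis
qed

lemma mem_polar_commute:
  assumes "P \<in> pg_points" "R \<in> pg_points"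
  shows "P \<in> polar R \<longleftrightarrow> R \<in> polar P"
proof -
  obtain v where v: "v \<noteq> zero3" "P = pt v"
    using assms(1) by (rule pg_pointsE)
  obtain w where w: "w \<noteq> zero3" "R = pt w"
    using assms(2) by (rule pg_pointsE)
  show ?thesis
    using v w by (simp add: polar_pt pt_in_pg_line_iff dot3_polar_vec polar_form_commute[of k v])
qed

lemma polar_inter_conic:
  assumes "R \<in> C"
  shows "polar R \<inter> C = {R}"
proof -
  obtain r where "r \<noteq> zero3" "R = pt r" "qform k r = 0"
    using assms by (rule conic_pointsE)
  then show ?thesis
    by (simp add: polar_pt polar_line_inter_conic)
qed

lemma tangent_line_iff_polar: "tangent_line C L \<longleftrightarrow> L \<in> polar ` C"
proof
  assume "tangent_line C L"
  then have L: "L \<in> pg_lines" "card (L \<inter> C) = 1"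
    by (auto simp: tangent_line_def)
  then obtain R where R: "L \<inter> C = {R}"
    by (meson card_1_singletonE)
  then have "R \<in> C"
    by blast
  then obtain r where r: "r \<noteq> zero3" "R = pt r"
    by (blast elim: conic_pointsE)
  with L R have "L = polar R"
    using tangent_eq_polar_line polar_pt by simp
  with \<open>R \<in> C\<close> show "L \<in> polar ` C"
    by blast
next
  assume "L \<in> polar ` C"
  then obtain R where "R \<in> C" "L = polar R"
    by blast
  then show "tangent_line C L"
    using polar_inter_conic polar_in_pg_lines conic_points_subset_pg_points[of k]
    unfolding tangent_line_def by (simp add: subsetD)
qed

lemma card_tangent_lines: "card {L. tangent_line C L} = card C"
proof -
  have eq: "{L. tangent_line C L} = polar ` C"
    using tangent_line_iff_polar by blast
  show ?thesis
    unfolding eq using inj_on_subset[OF inj_on_polar conic_points_subset_pg_points] by (rule card_image)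
qed

lemma card_tangents_through:
  assumes "P \<in> pg_points"
  shows "card {L. tangent_line C L \<and> P \<in> L} = card (C \<inter> polar P)"
proof -
  have "P \<in> polar R \<longleftrightarrow> R \<in> polar P" if "R \<in> C" for R
    using mem_polar_commute assms that conic_points_subset_pg_points by blast
  then have eq: "{L. tangent_line C L \<and> P \<in> L} = polar ` (C \<inter> polar P)"
    unfolding tangent_line_iff_polar by blast
  have "inj_on polar (C \<inter> polar P)"
    using inj_on_subset[OF inj_on_polar] conic_points_subset_pg_points[of k] by (meson Int_lower1 order_trans)
  then show ?thesis
    unfolding eq by (rule card_image)
qed

lemma card_tangents_through_conic_point:
  assumes "P \<in> C"
  shows "card {L. tangent_line C L \<and> P \<in> L} = 1"
proof -
  have "C \<inter> polar P = {P}"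
    using polar_inter_conic[OF assms] by blast
  moreover have "P \<in> pg_points"
    using assms conic_points_subset_pg_points by blast
  ultimately show ?thesis
    using card_tangents_through by simp
qed

lemma card_tangents_through_off_conic:
  assumes "P \<in> pg_points" "P \<notin> C"
  shows "card {L. tangent_line C L \<and> P \<in> L} \<in> {0, 2}"
proof -
  have "card (C \<inter> polar P) \<le> 2"
    using card_pg_line_inter_conic_le[OF polar_in_pg_lines[OF assms(1)]] by (simp add: Int_commute)
  moreover have "card (C \<inter> polar P) \<noteq> 1"
  proof
    assume "card (C \<inter> polar P) = 1"
    then obtain R where R: "polar P \<inter> C = {R}"
      by (metis Int_commute card_1_singletonE)
    then have "R \<in> C"
      by blast
    then obtain r where r: "r \<noteq> zero3" "R = pt r"
      by (blast elim: conic_pointsE)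
    with R have "polar P = polar R"
      using tangent_eq_polar_line polar_in_pg_lines assms(1) polar_pt by simp
    then have "P = R"
      using inj_onD[OF inj_on_polar] assms(1) \<open>R \<in> C\<close> conic_points_subset_pg_points[of k]
      by blast
    with assms(2) \<open>R \<in> C\<close> show False
      by simp
  qed
  ultimately show ?thesis
    using card_tangents_through[OF assms(1)] by auto
qed

lemma second_intersection_nonzero:
  assumes "qform k r = 0" "cross3 r x \<noteq> zero3"
  shows "second_intersection k r x \<noteq> zero3"
proof (cases "polar_form k r x = 0")
  case True
  then have "qform k x \<noteq> 0"
    using isotropic_orthogonal_imp_parallel assms by blast
  moreover have "r \<noteq> zero3"
    using assms(2) by auto
  moreover have "second_intersection k r x = smul3 (qform k x) r"
    unfolding second_intersection_def True by (cases r; cases x) simp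
  ultimately show ?thesis
    by simp
next
  case False
  then have "cross3 r (second_intersection k r x) \<noteq> zero3"
    using assms(2) by (simp add: cross3_second_intersection)
  then show ?thesis
    by auto
qed

lemma pt_second_intersection_inj:
  assumes "qform k r = 0" "det3 r x y \<noteq> 0"
    and "second_intersection k r x \<noteq> zero3" "second_intersection k r y \<noteq> zero3"
  shows "pt (second_intersection k r x) \<noteq> pt (second_intersection k r y)"
proof
  define gx where "gx = second_intersection k r x"
  define gy where "gy = second_intersection k r y"
  assume "pt (second_intersection k r x) = pt (second_intersection k r y)"
  then have "cross3 gy gx = zero3"
    using pt_eq_iff[OF assms(4,3)] unfolding gx_def gy_def by metis
  then obtain c where c: "gx = smul3 c gy"
    using cross3_eq_zero_iff assms(4) unfolding gy_def by blast
  with assms(3) have "c \<noteq> 0"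
    unfolding gx_def by auto
  with c have c': "gy = smul3 (1 / c) gx"
    by simp
  \<comment> \<open>\<open>gx\<close> lies on the line \<open>rx\<close> and \<open>gy\<close> on \<open>ry\<close>: testing \<open>gx = c gy\<close> against these
    two lines isolates the coefficients \<open>polar_form k r x\<close> and \<open>polar_form k r y\<close>\<close>
  have "- polar_form k r x * det3 x r y = c * (- polar_form k r y * det3 y r y)"
    using arg_cong[OF c, of "\<lambda>g. det3 g r y"] unfolding gx_def gy_def
    by (simp add: det3_second_intersection)
  moreover have "- polar_form k r y * det3 y r x = 1 / c * (- polar_form k r x * det3 x r x)"
    using arg_cong[OF c', of "\<lambda>g. det3 g r x"] unfolding gx_def gy_def
    by (simp add: det3_second_intersection)
  moreover have "det3 x r y = - det3 r x y" "det3 y r x = det3 r x y"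
    by (cases r; cases x; cases y; simp add: algebra_simps)+
  with assms(2) have "det3 x r y \<noteq> 0" "det3 y r x \<noteq> 0"
    by simp_all
  ultimately have "polar_form k r x = 0" "polar_form k r y = 0"
    by simp_all
  moreover have "polar_form k r r = 0"
    using assms(1) by (simp add: polar_form_diag)
  moreover have "polar_vec k r \<noteq> zero3"
    using assms(2) by (cases x; cases y) auto
  ultimately have "det3 r x y = 0"
    using det3_eq_zero_if_orthogonal[of "polar_vec k r"] by (simp add: dot3_polar_vec)
  with assms(2) show False ..
qed

lemma projection_from_conic_point:
  assumes r: "qform k r = 0" and l: "dot3 l r \<noteq> 0"
  shows "(\<lambda>P. pt (second_intersection k r (rep P))) ` pg_line l \<subseteq> C"
    and "inj_on (\<lambda>P. pt (second_intersection k r (rep P))) (pg_line l)"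
proof -
  have not_parallel: "cross3 r (rep P) \<noteq> zero3" if "P \<in> pg_line l" for P
  proof
    assume "cross3 r (rep P) = zero3"
    moreover have "r \<noteq> zero3"
      using l by (cases l) auto
    ultimately obtain c where "rep P = smul3 c r"
      using cross3_eq_zero_iff by blast
    with rep_pg_line[OF that] l show False
      by simp
  qed
  have nonzero: "second_intersection k r (rep P) \<noteq> zero3" if "P \<in> pg_line l" for P
    using second_intersection_nonzero[OF r not_parallel[OF that]] .
  show "(\<lambda>P. pt (second_intersection k r (rep P))) ` pg_line l \<subseteq> C"
  proof
    fix Q
    assume "Q \<in> (\<lambda>P. pt (second_intersection k r (rep P))) ` pg_line l"
    then obtain P where "P \<in> pg_line l" "Q = pt (second_intersection k r (rep P))"
      by blast
    then show "Q \<in> C"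
      using nonzero qform_second_intersection[OF r] by (simp add: mem_conic_points_iff)
  qed
  show "inj_on (\<lambda>P. pt (second_intersection k r (rep P))) (pg_line l)"
  proof (rule inj_onI, rule ccontr)
    fix P R
    assume PR: "P \<in> pg_line l" "R \<in> pg_line l"
      "pt (second_intersection k r (rep P)) = pt (second_intersection k r (rep R))" "P \<noteq> R"
    then have "cross3 (rep P) (rep R) \<noteq> zero3"
      using rep pt_eq_iff pg_line_subset_pg_points rep_pg_line(1) by (metis subsetD)
    then obtain c where "l = smul3 c (cross3 (rep P) (rep R))"
      using orthogonal_pair_imp_parallel_cross3 rep_pg_line(2) PR(1,2) by metis
    with l have "det3 r (rep P) (rep R) \<noteq> 0"
      by (simp add: dot3_cross3 det3_rotate[of r])
    with PR(3) show False
      using pt_second_intersection_inj[OF r _ nonzero nonzero] PR(1,2) by blast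
  qed
qed

lemma anisotropic_orthogonal_triple:
  assumes anisotropic: "\<And>v. v \<noteq> zero3 \<Longrightarrow> qform k v \<noteq> 0"
  obtains u v w where "u \<noteq> zero3" "v \<noteq> zero3" "w \<noteq> zero3"
    "polar_form k u v = 0" "polar_form k u w = 0" "polar_form k v w = 0"
proof -
  define u :: "'a vec3" where "u = (1, 0, 0)"
  have "u \<noteq> zero3"
    by (simp add: u_def)
  then have "polar_vec k u \<noteq> zero3"
    by simp
  then obtain v v' where v: "dot3 (polar_vec k u) v = 0" "dot3 (polar_vec k u) v' = 0" "cross3 v v' \<noteq> zero3"
    by (rule orthogonal_pair_exists)
  have "v \<noteq> zero3"
    using v(3) by auto
  have uv: "polar_form k u v = 0"
    using v(1) by (simp add: dot3_polar_vec)
  define w where "w = cross3 (polar_vec k u) (polar_vec k v)"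
  have "w \<noteq> zero3"
  proof
    assume "w = zero3"
    then have "cross3 u v = zero3"
      unfolding w_def by (rule polar_vec_cross3_eq_zeroD)
    then obtain c where c: "v = smul3 c u"
      using cross3_eq_zero_iff \<open>u \<noteq> zero3\<close> by blast
    with uv have "c * (2 * qform k u) = 0"
      by (simp only: polar_form_smul3 polar_form_diag)
    then have "c = 0"
      using anisotropic[OF \<open>u \<noteq> zero3\<close>] two_nonzero by simp
    with c \<open>v \<noteq> zero3\<close> show False
      by simp
  qed
  have "polar_form k u w = det3 (polar_vec k u) (polar_vec k u) (polar_vec k v)"
    "polar_form k v w = det3 (polar_vec k v) (polar_vec k u) (polar_vec k v)"
    by (simp_all only: w_def det3_def dot3_polar_vec)
  then show ?thesis
    using that \<open>u \<noteq> zero3\<close> \<open>v \<noteq> zero3\<close> \<open>w \<noteq> zero3\<close> uv by simp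
qed

end

section \<open>Conics over finite fields\<close>

lemma card_squares: "card (UNIV :: 'a::{field,finite} set) + 1 \<le> 2 * card (range (\<lambda>x::'a. x^2))"
proof -
  define S where "S = range (\<lambda>x::'a. x^2)"
  define U where "U = (\<Union>y \<in> S - {0}. {x::'a. x^2 = y})"
  have fibre: "card {x::'a. x^2 = y} \<le> 2" for y
  proof (cases "\<exists>x. x^2 = y")
    case True
    then obtain x1 where "x1^2 = y"
      by blast
    then have "{x. x^2 = y} \<subseteq> {x1, -x1}"
      by (auto simp: power2_eq_iff)
    then show ?thesis
      by (rule order_trans[OF card_mono[rotated]]) (simp_all add: card_insert_if)
  qed simp
  have "0 \<in> S"
    unfolding S_def by (rule range_eqI[of _ _ 0]) simp
  have "UNIV \<subseteq> insert 0 U"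
    unfolding U_def S_def by auto
  then have "card (UNIV :: 'a set) \<le> Suc (card U)"
    by (rule order_trans[OF card_mono[rotated]]) (simp_all add: card_insert_if)
  moreover have "card U \<le> (\<Sum>y \<in> S - {0}. card {x. x^2 = y})"
    unfolding U_def by (rule card_UN_le) simp
  moreover have "\<dots> \<le> (\<Sum>y \<in> S - {0}. 2)"
    by (rule sum_mono) (rule fibre)
  moreover have "\<dots> = card (S - {0}) * 2"
    by (rule sum_constant[THEN trans]) simp
  moreover have "card (S - {0}) = card S - 1"
    using \<open>0 \<in> S\<close> by (rule card_Diff_singleton)
  moreover have "0 < card S"
    using \<open>0 \<in> S\<close> by (auto simp: card_gt_0_iff)
  ultimately show ?thesis
    unfolding S_def by linarith
qed

lemma diagonal_quadratic_solvable:
  fixes a b c :: "'a::{field,finite}"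
  assumes "a \<noteq> 0" "b \<noteq> 0"
  shows "\<exists>x y. a * x^2 + b * y^2 + c = 0"
proof (rule ccontr)
  assume none: "\<not> ?thesis"
  define S where "S = range (\<lambda>x::'a. x^2)"
  define S1 where "S1 = (\<lambda>s. a * s) ` S"
  define S2 where "S2 = (\<lambda>s. - b * s - c) ` S"
  have "a * x^2 \<noteq> - b * y^2 - c" for x y
  proof
    assume "a * x^2 = - b * y^2 - c"
    then have "a * x^2 + b * y^2 + c = (- b * y^2 - c) + b * y^2 + c"
      by simp
    then have "a * x^2 + b * y^2 + c = 0"
      by simp
    with none show False
      by blast
  qed
  then have "S1 \<inter> S2 = {}"
    unfolding S1_def S2_def S_def by auto
  then have "card S1 + card S2 = card (S1 \<union> S2)"
    by (simp add: card_Un_disjoint)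
  also have "\<dots> \<le> card (UNIV :: 'a set)"
    by (rule card_mono) simp_all
  finally have "card S1 + card S2 \<le> card (UNIV :: 'a set)" .
  moreover have "card S1 = card S"
    unfolding S1_def using assms(1) by (intro card_image inj_onI) simp
  moreover have "card S2 = card S"
    unfolding S2_def using assms(2) by (intro card_image inj_onI) simp
  ultimately show False
    using card_squares[where 'a = 'a] unfolding S_def by linarith
qed

locale finite_conic = conic k for k :: "'a::{field,finite} conic_coeffs"
begin

lemma conic_points_nonempty: "\<exists>r. r \<noteq> zero3 \<and> qform k r = 0"
proof (rule ccontr)
  assume "\<not> ?thesis"
  then have anisotropic: "qform k v \<noteq> 0" if "v \<noteq> zero3" for v
    using that by blast
  then obtain u v w where uvw: "u \<noteq> zero3" "v \<noteq> zero3" "w \<noteq> zero3"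
    and orth: "polar_form k u v = 0" "polar_form k u w = 0" "polar_form k v w = 0"
    by (rule anisotropic_orthogonal_triple)
  obtain x y where xy: "qform k u * x^2 + qform k v * y^2 + qform k w = 0"
    using diagonal_quadratic_solvable[OF anisotropic[OF uvw(1)] anisotropic[OF uvw(2)]] by blast
  define g where "g = lincomb3 u v w (x, y, 1)"
  have "qform k g = qform k u * x^2 + qform k v * y^2 + qform k w"
    unfolding g_def qform_lincomb3 orth by (simp add: algebra_simps)
  with xy have "qform k g = 0"
    by simp
  moreover have "polar_form k w g = 2 * qform k w"
    unfolding g_def polar_form_lincomb3 polar_form_commute[of k w u] polar_form_commute[of k w v] orth
    by (simp add: polar_form_diag)
  then have "g \<noteq> zero3"
    using anisotropic[OF uvw(3)] two_nonzero by (metis mult_eq_0_iff polar_form_zero)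
  ultimately show False
    using anisotropic by simp
qed

lemma card_conic_points_ge: "card (UNIV :: 'a set) + 1 \<le> card C"
proof -
  obtain r where r: "r \<noteq> zero3" "qform k r = 0"
    using conic_points_nonempty by blast
  obtain l where l: "dot3 l r \<noteq> 0"
    using exists_dot3_nonzero r(1) by blast
  then have "l \<noteq> zero3"
    by (cases r) auto
  note projection = projection_from_conic_point[OF r(2) l]
  have "card (pg_line l) \<le> card C"
    using card_inj_on_le[OF projection(2,1)] by simp
  with \<open>l \<noteq> zero3\<close> show ?thesis
    by (simp add: card_pg_line)
qed

end

section \<open>Subplanes\<close>

definition subplane_line :: "'a::field vec3 set set \<Rightarrow> 'a vec3 set set \<Rightarrow> bool" where
  "subplane_line B L \<longleftrightarrow> L \<in> pg_lines \<and> 2 \<le> card (L \<inter> B)"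

lemma subplane_subset_pg_points: "subplane_of_order n B \<Longrightarrow> B \<subseteq> pg_points"
  by (simp add: subplane_of_order_def)

lemma subplane_lineI:
  fixes B :: "'a::{field,finite} vec3 set set"
  assumes "L \<in> pg_lines" "P \<in> L" "P \<in> B" "R \<in> L" "R \<in> B" "P \<noteq> R"
  shows "subplane_line B L"
proof -
  have "card {P, R} \<le> card (L \<inter> B)"
    using assms by (intro card_mono) auto
  with assms show ?thesis
    by (simp add: subplane_line_def)
qed

lemma subplane_lines_meet_in:
  assumes "subplane_of_order n B" "subplane_line B L1" "subplane_line B L2" "L1 \<noteq> L2"
  shows "L1 \<inter> L2 \<subseteq> B"
  using assms unfolding subplane_of_order_def subplane_line_def by blast

lemma card_subplane_line:
  assumes "subplane_of_order n B" "subplane_line B L"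
  shows "card (L \<inter> B) = n + 1"
  using assms unfolding subplane_of_order_def subplane_line_def by blast

lemma subplane_line_join:
  fixes B :: "'a::{field,finite} vec3 set set"
  assumes "subplane_of_order n B" "P \<in> B" "R \<in> B" "P \<noteq> R"
  shows "subplane_line B (pg_join P R)"
proof -
  have "P \<in> pg_points" "R \<in> pg_points"
    using assms subplane_subset_pg_points by blast+
  note join = pg_join[OF this assms(4)]
  show ?thesis
    using subplane_lineI[OF join(1,2) assms(2) join(3) assms(3,4)] .
qed

lemma subplane_meet_point:
  fixes B :: "'a::{field,finite} vec3 set set"
  assumes B: "subplane_of_order n B" "pt a \<in> B" "pt b \<in> B" "pt c \<in> B" "pt d \<in> B"
    and ab: "cross3 a b \<noteq> zero3" and cd: "cross3 c d \<noteq> zero3" and abc: "det3 a b c \<noteq> 0"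
    and x: "x \<noteq> zero3" "det3 a b x = 0" "det3 c d x = 0"
  shows "pt x \<in> B"
proof -
  define L1 where "L1 = pg_line (cross3 a b)"
  define L2 where "L2 = pg_line (cross3 c d)"
  have "a \<noteq> zero3" "b \<noteq> zero3" "c \<noteq> zero3" "d \<noteq> zero3"
    using ab cd by auto
  then have "pt a \<noteq> pt b" "pt c \<noteq> pt d"
    using ab cd by (simp_all add: pt_eq_iff)
  then have "subplane_line B L1" "subplane_line B L2"
    unfolding L1_def L2_def
    using subplane_lineI[OF pg_line_in_pg_lines[OF ab] pt_in_pg_line_cross3(1)[OF ab] B(2)
        pt_in_pg_line_cross3(2)[OF ab] B(3)]
      subplane_lineI[OF pg_line_in_pg_lines[OF cd] pt_in_pg_line_cross3(1)[OF cd] B(4)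
        pt_in_pg_line_cross3(2)[OF cd] B(5)]
    by simp_all
  moreover have "L1 \<noteq> L2"
  proof -
    have "pt c \<notin> L1"
      unfolding L1_def using abc \<open>c \<noteq> zero3\<close> by (simp add: pt_in_pg_line_iff dot3_cross3)
    moreover have "pt c \<in> L2"
      unfolding L2_def using cd by (rule pt_in_pg_line_cross3)
    ultimately show ?thesis
      by blast
  qed
  moreover have "pt x \<in> L1 \<inter> L2"
    unfolding L1_def L2_def using x by (simp add: pt_in_pg_line_iff dot3_cross3)
  ultimately show ?thesis
    using subplane_lines_meet_in[OF B(1)] by blast
qed

lemma subplane_triangle:
  assumes "subplane_of_order n B"
  obtains Q1 Q2 Q3 where "Q1 \<in> B" "Q2 \<in> B" "Q3 \<in> B" "Q1 \<noteq> Q2" "Q1 \<noteq> Q3"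
    "Q3 \<notin> pg_join Q1 Q2"
proof -
  obtain Qd where Qd: "Qd \<subseteq> B" "card Qd = 4" "\<forall>l \<in> pg_lines. card (l \<inter> Qd) \<le> 2"
    using assms[unfolded subplane_of_order_def, THEN conjunct2, THEN conjunct1] by blast
  then have "3 \<le> card Qd"
    by simp
  then obtain S where "S \<subseteq> Qd" "card S = 3"
    by (rule obtain_subset_with_card_n)
  then obtain Q1 Q2 Q3 where Q: "{Q1, Q2, Q3} \<subseteq> Qd" "Q1 \<noteq> Q2" "Q2 \<noteq> Q3" "Q1 \<noteq> Q3"
    unfolding card_3_iff by blast
  with Qd(1) have B: "Q1 \<in> B" "Q2 \<in> B" "Q3 \<in> B"
    by auto
  then have "Q1 \<in> pg_points" "Q2 \<in> pg_points"
    using assms subplane_subset_pg_points by blast+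
  note join = pg_join[OF this Q(2)]
  have "Q3 \<notin> pg_join Q1 Q2"
  proof
    assume "Q3 \<in> pg_join Q1 Q2"
    with join Q(1) have "{Q1, Q2, Q3} \<subseteq> pg_join Q1 Q2 \<inter> Qd"
      by blast
    moreover have "finite Qd"
      using Qd(2) card.infinite by fastforce
    ultimately have "card {Q1, Q2, Q3} \<le> card (pg_join Q1 Q2 \<inter> Qd)"
      by (intro card_mono) simp_all
    moreover have "card (pg_join Q1 Q2 \<inter> Qd) \<le> 2"
      using Qd(3) join(1) by (rule bspec)
    ultimately show False
      using Q(2-4) by simp
  qed
  with B Q(2,4) that show ?thesis
    by blast
qed

lemma pg_join_injective_on_pairs:
  assumes "b \<in> pg_lines" "c \<in> pg_lines" "b \<noteq> c" "Q \<in> b" "Q \<in> c"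
    and "A \<subseteq> c - {Q}" "D \<subseteq> b - {Q}"
  shows "inj_on (\<lambda>(Y, X). pg_join Y X) (A \<times> D)"
    and "b \<notin> (\<lambda>(Y, X). pg_join Y X) ` (A \<times> D)" "c \<notin> (\<lambda>(Y, X). pg_join Y X) ` (A \<times> D)"
proof -
  have off: "Y \<notin> b" "X \<notin> c" if "Y \<in> A" "X \<in> D" for Y X
    using pg_lines_unique[OF assms(1,2,4,5)] assms(3,6,7) that by blast+
  have join: "pg_join Y X \<in> pg_lines" "Y \<in> pg_join Y X" "X \<in> pg_join Y X"
    if "Y \<in> A" "X \<in> D" for Y X
  proof -
    have "Y \<in> pg_points" "X \<in> pg_points"
      using that assms(1,2,6,7) pg_line_subset_pg_points by (blast elim: pg_linesE)+
    moreover have "Y \<noteq> X"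
      using off that assms(7) by blast
    ultimately show "pg_join Y X \<in> pg_lines" "Y \<in> pg_join Y X" "X \<in> pg_join Y X"
      by (rule pg_join)+
  qed
  show "inj_on (\<lambda>(Y, X). pg_join Y X) (A \<times> D)"
  proof (rule inj_onI, clarify)
    fix Y X Y' X'
    assume YX: "Y \<in> A" "X \<in> D" "Y' \<in> A" "X' \<in> D" and eq: "pg_join Y X = pg_join Y' X'"
    have "Y = Y'"
    proof (rule ccontr)
      assume "Y \<noteq> Y'"
      with YX eq assms(6) have "pg_join Y X = c"
        using pg_lines_unique[OF join(1)[OF YX(1,2)] assms(2)] join[OF YX(3,4)] join(2)[OF YX(1,2)]
        by blast
      with off[OF YX(1,2)] join(3)[OF YX(1,2)] show False
        by simp
    qed
    moreover have "X = X'"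
    proof (rule ccontr)
      assume "X \<noteq> X'"
      with YX eq assms(7) have "pg_join Y X = b"
        using pg_lines_unique[OF join(1)[OF YX(1,2)] assms(1)] join[OF YX(3,4)] join(3)[OF YX(1,2)]
        by blast
      with off[OF YX(1,2)] join(2)[OF YX(1,2)] show False
        by simp
    qed
    ultimately show "Y = Y' \<and> X = X'"
      by simp
  qed
  show "b \<notin> (\<lambda>(Y, X). pg_join Y X) ` (A \<times> D)" "c \<notin> (\<lambda>(Y, X). pg_join Y X) ` (A \<times> D)"
    using off join by fastforce+
qed

lemma card_subplane_lines_le_if_disjoint:
  fixes B :: "'a::{field,finite} vec3 set set"
  assumes "subplane_of_order n B" "L \<in> pg_lines" "L \<inter> B = {}"
    and "\<And>M. M \<in> S \<Longrightarrow> subplane_line B M"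
  shows "card S \<le> card L"
proof -
  have "\<exists>X. X \<in> M \<inter> L" if "M \<in> S" for M
    using pg_lines_meet assms(2,4) that unfolding subplane_line_def by blast
  then obtain \<phi> where \<phi>: "\<phi> M \<in> M \<inter> L" if "M \<in> S" for M
    by metis
  \<comment> \<open>two lines of the subplane meet inside it, hence not on \<open>L\<close>\<close>
  have "inj_on \<phi> S"
  proof (rule inj_onI, rule ccontr)
    fix M1 M2
    assume M: "M1 \<in> S" "M2 \<in> S" "\<phi> M1 = \<phi> M2" "M1 \<noteq> M2"
    then have "\<phi> M1 \<in> M1 \<inter> M2"
      using \<phi> by (metis IntD1 IntI)
    then have "\<phi> M1 \<in> B"
      using subplane_lines_meet_in[OF assms(1) assms(4) assms(4)] M by blast
    with \<phi>[OF M(1)] assms(3) show False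
      by blast
  qed
  moreover have "\<phi> ` S \<subseteq> L"
    using \<phi> by blast
  ultimately show ?thesis
    by (simp add: card_inj_on_le)
qed

lemma subplane_lines_from_two_lines:
  fixes B :: "'a::{field,finite} vec3 set set"
  assumes sub: "subplane_of_order q B"
    and b: "subplane_line B b" and c: "subplane_line B c" and "b \<noteq> c"
    and Q: "Q \<in> b" "Q \<in> c" "Q \<in> B"
  obtains S where "card S = q * q + 2" "\<And>M. M \<in> S \<Longrightarrow> subplane_line B M"
proof -
  define A where "A = c \<inter> B - {Q}"
  define D where "D = b \<inter> B - {Q}"
  define F where "F = (\<lambda>(Y, X). pg_join Y X) ` (A \<times> D)"
  have lines: "b \<in> pg_lines" "c \<in> pg_lines"
    using b c by (simp_all add: subplane_line_def)
  have "card A = q" "card D = q"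
    unfolding A_def D_def using card_subplane_line[OF sub] b c Q by (simp_all add: card_Diff_singleton)
  have "A \<subseteq> c - {Q}" "D \<subseteq> b - {Q}"
    unfolding A_def D_def by blast+
  note F_props = pg_join_injective_on_pairs[OF lines \<open>b \<noteq> c\<close> Q(1,2) this, folded F_def]
  have "card F = q * q"
    unfolding F_def card_image[OF F_props(1)] card_cartesian_product \<open>card A = q\<close> \<open>card D = q\<close> ..
  then have "card (insert b (insert c F)) = q * q + 2"
    using F_props(2,3) \<open>b \<noteq> c\<close> by simp
  moreover have "subplane_line B M" if "M \<in> insert b (insert c F)" for M
  proof -
    from that consider "M = b" | "M = c" | "M \<in> F"
      by blast
    then show ?thesis
    proof cases
      case 3
      then obtain Y X where "Y \<in> A" "X \<in> D" "M = pg_join Y X"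
        unfolding F_def by auto
      moreover have "Y \<noteq> X"
      proof
        assume "Y = X"
        with \<open>Y \<in> A\<close> \<open>X \<in> D\<close> have "Y \<in> b" "Y \<in> c" "Y \<noteq> Q"
          unfolding A_def D_def by simp_all
        with \<open>b \<noteq> c\<close> show False
          using pg_lines_unique[OF lines Q(1,2)] by blast
      qed
      ultimately show ?thesis
        using subplane_line_join[OF sub] unfolding A_def D_def by simp
    qed (use b c in simp_all)
  qed
  ultimately show thesis
    using that by blast
qed

lemma line_meets_subplane:
  fixes B :: "'a::{field,finite} vec3 set set"
  assumes sub: "subplane_of_order q B" and card_field: "card (UNIV :: 'a set) = q^2"
    and L: "L \<in> pg_lines"
  shows "L \<inter> B \<noteq> {}"
proof
  assume LB: "L \<inter> B = {}"
  obtain Q1 Q2 Q3 where Q: "Q1 \<in> B" "Q2 \<in> B" "Q3 \<in> B" "Q1 \<noteq> Q2" "Q1 \<noteq> Q3"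
    "Q3 \<notin> pg_join Q1 Q2"
    using sub by (rule subplane_triangle)
  have "Q1 \<in> pg_points" "Q2 \<in> pg_points" "Q3 \<in> pg_points"
    using Q(1-3) subplane_subset_pg_points[OF sub] by (simp_all add: subsetD)
  note join_b = pg_join[OF this(1,2) Q(4)] and join_c = pg_join[OF this(1,3) Q(5)]
  have "pg_join Q1 Q2 \<noteq> pg_join Q1 Q3"
    using Q(6) join_c(3) by metis
  then obtain S where S: "card S = q * q + 2" "\<And>M. M \<in> S \<Longrightarrow> subplane_line B M"
    using subplane_lines_from_two_lines[OF sub subplane_line_join[OF sub Q(1,2,4)]
        subplane_line_join[OF sub Q(1,3,5)] _ join_b(2) join_c(2) Q(1)] by blast
  from S(2) have "card S \<le> card L"
    by (rule card_subplane_lines_le_if_disjoint[OF sub L LB])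
  moreover obtain l where "l \<noteq> zero3" "L = pg_line l"
    using L by (rule pg_linesE)
  then have "card L = q^2 + 1"
    using card_field by (simp add: card_pg_line)
  ultimately show False
    using S(1) by (simp add: power2_eq_square)
qed

section \<open>Pascal's theorem and the tangents at points of a subplane\<close>

lemma qform_lincomb3_conic_frame:
  assumes "qform k p1 = 0" "qform k p2 = 0" "qform k p3 = 0"
  shows "qform k (lincomb3 p1 p2 p3 (x, y, z)) =
    x * y * polar_form k p1 p2 + x * z * polar_form k p1 p3 + y * z * polar_form k p2 p3"
  using assms by (simp add: qform_lincomb3)

text \<open>Pascal's theorem for the degenerate hexagon \<open>p1 p1 p2 p3 p4 p5\<close>, computed in coordinates
  with respect to the frame \<open>p1, p2, p3\<close> of conic points, in which the conic has no square terms: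
  \<open>X = p1p2 \<inter> p4p5\<close> and \<open>Y = p2p3 \<inter> p5p1\<close> are collinear with the point \<open>Z\<close> where the
  tangent at \<open>p1\<close> meets \<open>p3p4\<close>.\<close>

lemma pascal_frame:
  fixes k :: "'a::field conic_coeffs" and p1 p2 p3 :: "'a vec3"
    and x1 y1 z1 x2 y2 z2 :: 'a
  defines "L \<equiv> lincomb3 p1 p2 p3" and "D \<equiv> det3 p1 p2 p3"
    and "b12 \<equiv> polar_form k p1 p2" and "b13 \<equiv> polar_form k p1 p3" and "b23 \<equiv> polar_form k p2 p3"
  defines "p4 \<equiv> L (x1, y1, z1)" and "p5 \<equiv> L (x2, y2, z2)"
    and "X \<equiv> L (z1*x2 - z2*x1, z1*y2 - z2*y1, 0)" and "Y \<equiv> L (0, y2, z2)"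
    and "Z \<equiv> L (- b13*x1, - b13*y1, y1*b12)"
  assumes Q: "qform k p1 = 0" "qform k p2 = 0" "qform k p3 = 0" "qform k p4 = 0" "qform k p5 = 0"
  shows "det3 p1 p2 X = 0" "det3 p4 p5 X = 0" "det3 p2 p3 Y = 0" "det3 p5 p1 Y = 0"
    and "det3 p3 p4 Z = 0" "polar_form k p1 Z = 0" "det3 X Y Z = 0"
    and "det3 X Y p2 = - D * z2 * (z1*x2 - z2*x1)" "det3 p3 p4 X = D * z1 * (x1*y2 - y1*x2)"
    and "det3 p1 Z p2 = - D * y1 * b12"
proof -
  have dL: "det3 (L a) (L b) (L c) = D * det3 a b c" for a b c
    unfolding L_def D_def by (rule det3_lincomb3)
  have Le: "p1 = L (1, 0, 0)" "p2 = L (0, 1, 0)" "p3 = L (0, 0, 1)"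
    unfolding L_def by simp_all
  have E4: "x1*y1*b12 + x1*z1*b13 + y1*z1*b23 = 0"
    using Q(4) unfolding p4_def L_def qform_lincomb3_conic_frame[OF Q(1-3)] b12_def b13_def b23_def .
  have E5: "x2*y2*b12 + x2*z2*b13 + y2*z2*b23 = 0"
    using Q(5) unfolding p5_def L_def qform_lincomb3_conic_frame[OF Q(1-3)] b12_def b13_def b23_def .
  have "det3 X Y Z = D * (y1*z1 * (x2*y2*b12 + x2*z2*b13 + y2*z2*b23)
      - y2*z2 * (x1*y1*b12 + x1*z1*b13 + y1*z1*b23))"
    unfolding X_def Y_def Z_def dL by (simp add: algebra_simps)
  with E4 E5 show "det3 X Y Z = 0"
    by simp
  show "polar_form k p1 Z = 0"
    unfolding Z_def L_def polar_form_lincomb3 b12_def b13_def using Q(1) by (simp add: polar_form_diag)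
  show "det3 p1 p2 X = 0" "det3 p4 p5 X = 0" "det3 p2 p3 Y = 0" "det3 p5 p1 Y = 0"
    "det3 p3 p4 Z = 0" "det3 X Y p2 = - D * z2 * (z1*x2 - z2*x1)"
    "det3 p3 p4 X = D * z1 * (x1*y2 - y1*x2)" "det3 p1 Z p2 = - D * y1 * b12"
    unfolding X_def Y_def Z_def p4_def p5_def Le dL by (simp_all add: algebra_simps)
qed

context conic
begin

lemma pascal_tangent_point:
  assumes Q: "qform k p1 = 0" "qform k p2 = 0" "qform k p3 = 0" "qform k p4 = 0" "qform k p5 = 0"
    and cr: "cross3 p1 p2 \<noteq> zero3" "cross3 p1 p3 \<noteq> zero3" "cross3 p1 p4 \<noteq> zero3"
      "cross3 p1 p5 \<noteq> zero3" "cross3 p2 p3 \<noteq> zero3" "cross3 p2 p4 \<noteq> zero3"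
      "cross3 p2 p5 \<noteq> zero3" "cross3 p3 p4 \<noteq> zero3" "cross3 p3 p5 \<noteq> zero3"
      "cross3 p4 p5 \<noteq> zero3"
  obtains X Y Z where
    "det3 p1 p2 X = 0" "det3 p4 p5 X = 0" "det3 p2 p3 Y = 0" "det3 p5 p1 Y = 0"
    "det3 p3 p4 Z = 0" "det3 X Y Z = 0" "polar_form k p1 Z = 0"
    "cross3 X Y \<noteq> zero3" "det3 p3 p4 X \<noteq> 0" "cross3 p1 Z \<noteq> zero3"
proof -
  have dets: "det3 p1 p2 p3 \<noteq> 0" "det3 p1 p2 p4 \<noteq> 0" "det3 p1 p2 p5 \<noteq> 0"
    "det3 p1 p3 p4 \<noteq> 0" "det3 p3 p4 p5 \<noteq> 0" "det3 p2 p4 p5 \<noteq> 0"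
    using det3_conic_points_nonzero Q cr by blast+
  obtain x1 y1 z1 where p4: "p4 = lincomb3 p1 p2 p3 (x1, y1, z1)"
    using lincomb3_surj[OF dets(1)] by (metis prod_cases3)
  obtain x2 y2 z2 where p5: "p5 = lincomb3 p1 p2 p3 (x2, y2, z2)"
    using lincomb3_surj[OF dets(1)] by (metis prod_cases3)
  have "det3 p1 p2 p4 = det3 p1 p2 p3 * z1" "det3 p1 p2 p5 = det3 p1 p2 p3 * z2"
    "det3 p1 p3 p4 = det3 p1 p2 p3 * (- y1)" "det3 p3 p4 p5 = det3 p1 p2 p3 * (x1*y2 - y1*x2)"
    "det3 p2 p4 p5 = det3 p1 p2 p3 * (z1*x2 - z2*x1)"
    using det3_lincomb3[of p1 p2 p3 "(1, 0, 0)" "(0, 1, 0)" "(x1, y1, z1)"]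
      det3_lincomb3[of p1 p2 p3 "(1, 0, 0)" "(0, 1, 0)" "(x2, y2, z2)"]
      det3_lincomb3[of p1 p2 p3 "(1, 0, 0)" "(0, 0, 1)" "(x1, y1, z1)"]
      det3_lincomb3[of p1 p2 p3 "(0, 0, 1)" "(x1, y1, z1)" "(x2, y2, z2)"]
      det3_lincomb3[of p1 p2 p3 "(0, 1, 0)" "(x1, y1, z1)" "(x2, y2, z2)"]
    by (simp_all add: p4 p5 algebra_simps)
  with dets(2-6) have nonzero: "z1 \<noteq> 0" "z2 \<noteq> 0" "y1 \<noteq> 0" "x1*y2 - y1*x2 \<noteq> 0" "z1*x2 - z2*x1 \<noteq> 0"
    by auto
  have "polar_form k p1 p2 \<noteq> 0"
    using isotropic_orthogonal_imp_parallel Q cr by blast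
  note frame = pascal_frame[of k p1 p2 p3 x1 y1 z1 x2 y2 z2, folded p4 p5, OF Q]
  show thesis
  proof (rule that[OF frame(1-5,7,6)])
    show "det3 p3 p4 (lincomb3 p1 p2 p3 (z1*x2 - z2*x1, z1*y2 - z2*y1, 0)) \<noteq> 0"
      using frame(9) dets(1) nonzero by simp
    show "cross3 (lincomb3 p1 p2 p3 (z1*x2 - z2*x1, z1*y2 - z2*y1, 0)) (lincomb3 p1 p2 p3 (0, y2, z2)) \<noteq> zero3"
      by (rule cross3_nonzero_if_det3_nonzero[where c = p2]) (use frame(8) dets(1) nonzero in simp)
    show "cross3 p1 (lincomb3 p1 p2 p3 (- polar_form k p1 p3 * x1, - polar_form k p1 p3 * y1,
        y1 * polar_form k p1 p2)) \<noteq> zero3"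
      by (rule cross3_nonzero_if_det3_nonzero[where c = p2])
        (use frame(10) dets(1) nonzero \<open>polar_form k p1 p2 \<noteq> 0\<close> in simp)
  qed
qed

end

lemma five_distinct_elements:
  assumes "R \<in> S" "5 \<le> card S"
  obtains P2 P3 P4 P5 where "P2 \<in> S" "P3 \<in> S" "P4 \<in> S" "P5 \<in> S" "distinct [R, P2, P3, P4, P5]"
proof -
  have "4 \<le> card (S - {R})"
    using assms by (simp add: card_Diff_singleton)
  then obtain S4 where S4: "S4 \<subseteq> S - {R}" "card S4 = 4"
    by (rule obtain_subset_with_card_n)
  then have "card S4 = Suc 3"
    by simp
  then obtain P2 S3 where S3: "S4 = insert P2 S3" "P2 \<notin> S3" "card S3 = 3"
    unfolding card_Suc_eq by blast
  then obtain P3 P4 P5 where "S3 = {P3, P4, P5}" "P3 \<noteq> P4" "P4 \<noteq> P5" "P3 \<noteq> P5"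
    unfolding card_3_iff by blast
  with S3 S4(1) have "P2 \<in> S" "P3 \<in> S" "P4 \<in> S" "P5 \<in> S" "distinct [R, P2, P3, P4, P5]"
    by auto
  then show thesis
    by (rule that)
qed

context conic
begin

lemma five_conic_points:
  assumes "R \<in> S" "S \<subseteq> C" "5 \<le> card S"
  obtains p1 p2 p3 p4 p5 where "R = pt p1" "pt p2 \<in> S" "pt p3 \<in> S" "pt p4 \<in> S" "pt p5 \<in> S"
    and "qform k p1 = 0" "qform k p2 = 0" "qform k p3 = 0" "qform k p4 = 0" "qform k p5 = 0"
    and "cross3 p1 p2 \<noteq> zero3" "cross3 p1 p3 \<noteq> zero3" "cross3 p1 p4 \<noteq> zero3"
      "cross3 p1 p5 \<noteq> zero3" "cross3 p2 p3 \<noteq> zero3" "cross3 p2 p4 \<noteq> zero3"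
      "cross3 p2 p5 \<noteq> zero3" "cross3 p3 p4 \<noteq> zero3" "cross3 p3 p5 \<noteq> zero3"
      "cross3 p4 p5 \<noteq> zero3"
proof -
  obtain P2 P3 P4 P5 where in_S: "P2 \<in> S" "P3 \<in> S" "P4 \<in> S" "P5 \<in> S"
    and distinct: "distinct [R, P2, P3, P4, P5]"
    using five_distinct_elements[OF assms(1,3)] by blast
  with assms(1,2) have in_C: "R \<in> C" "P2 \<in> C" "P3 \<in> C" "P4 \<in> C" "P5 \<in> C"
    by blast+
  obtain p1 where p1: "p1 \<noteq> zero3" "R = pt p1" "qform k p1 = 0"
    using in_C(1) by (rule conic_pointsE)
  obtain p2 where p2: "p2 \<noteq> zero3" "P2 = pt p2" "qform k p2 = 0"
    using in_C(2) by (rule conic_pointsE)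
  obtain p3 where p3: "p3 \<noteq> zero3" "P3 = pt p3" "qform k p3 = 0"
    using in_C(3) by (rule conic_pointsE)
  obtain p4 where p4: "p4 \<noteq> zero3" "P4 = pt p4" "qform k p4 = 0"
    using in_C(4) by (rule conic_pointsE)
  obtain p5 where p5: "p5 \<noteq> zero3" "P5 = pt p5" "qform k p5 = 0"
    using in_C(5) by (rule conic_pointsE)
  show thesis
    by (rule that[of p1 p2 p3 p4 p5])
      (use in_S distinct p1 p2 p3 p4 p5 in \<open>simp_all add: pt_eq_iff[symmetric]\<close>)
qed

end

context finite_conic
begin

lemma tangent_is_subplane_line:
  assumes sub: "subplane_of_order n B" and R: "R \<in> C \<inter> B" and five: "5 \<le> card (C \<inter> B)"
  shows "subplane_line B (polar R)"
proof -
  obtain p1 p2 p3 p4 p5 where p1: "R = pt p1" and in_CB: "pt p2 \<in> C \<inter> B" "pt p3 \<in> C \<inter> B"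
      "pt p4 \<in> C \<inter> B" "pt p5 \<in> C \<inter> B"
    and Q: "qform k p1 = 0" "qform k p2 = 0" "qform k p3 = 0" "qform k p4 = 0" "qform k p5 = 0"
    and cr: "cross3 p1 p2 \<noteq> zero3" "cross3 p1 p3 \<noteq> zero3" "cross3 p1 p4 \<noteq> zero3"
      "cross3 p1 p5 \<noteq> zero3" "cross3 p2 p3 \<noteq> zero3" "cross3 p2 p4 \<noteq> zero3"
      "cross3 p2 p5 \<noteq> zero3" "cross3 p3 p4 \<noteq> zero3" "cross3 p3 p5 \<noteq> zero3"
      "cross3 p4 p5 \<noteq> zero3"
    using five_conic_points[OF R _ five] by blast
  have in_B: "pt p1 \<in> B" "pt p2 \<in> B" "pt p3 \<in> B" "pt p4 \<in> B" "pt p5 \<in> B"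
    using R p1 in_CB by simp_all
  obtain X Y Z where X: "det3 p1 p2 X = 0" "det3 p4 p5 X = 0"
    and Y: "det3 p2 p3 Y = 0" "det3 p5 p1 Y = 0"
    and Z: "det3 p3 p4 Z = 0" "det3 X Y Z = 0"
    and tangent: "polar_form k p1 Z = 0"
    and nondegenerate: "cross3 X Y \<noteq> zero3" "det3 p3 p4 X \<noteq> 0" "cross3 p1 Z \<noteq> zero3"
    using pascal_tangent_point[OF Q cr] by blast
  then have "X \<noteq> zero3" "Y \<noteq> zero3" "Z \<noteq> zero3" "p1 \<noteq> zero3"
    by auto
  have "cross3 p5 p1 \<noteq> zero3"
    using cr(4) cross3_swap_eq_zero by blast
  have "pt X \<in> B"
    using subplane_meet_point[OF sub in_B(1,2,4,5) cr(1,10)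
        det3_conic_points_nonzero[OF Q(1,2,4) cr(1,3,6)] \<open>X \<noteq> zero3\<close> X] .
  moreover have "pt Y \<in> B"
    using subplane_meet_point[OF sub in_B(2,3,5,1) cr(5) \<open>cross3 p5 p1 \<noteq> zero3\<close>
        det3_conic_points_nonzero[OF Q(2,3,5) cr(5,7,9)] \<open>Y \<noteq> zero3\<close> Y] .
  ultimately have "pt Z \<in> B"
    by (rule subplane_meet_point[OF sub in_B(3,4) _ _ cr(8) nondegenerate(1,2) \<open>Z \<noteq> zero3\<close> Z])
  moreover have "pt p1 \<in> polar R" "pt Z \<in> polar R"
    using p1 Q(1) \<open>p1 \<noteq> zero3\<close> \<open>Z \<noteq> zero3\<close> tangent
    by (simp_all add: polar_pt pt_in_pg_line_iff dot3_polar_vec polar_form_diag)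
  moreover have "pt p1 \<noteq> pt Z"
    using \<open>p1 \<noteq> zero3\<close> \<open>Z \<noteq> zero3\<close> nondegenerate(3) by (simp add: pt_eq_iff)
  moreover have "polar R \<in> pg_lines"
    using R conic_points_subset_pg_points polar_in_pg_lines by blast
  ultimately show ?thesis
    using subplane_lineI[of "polar R" "pt p1" B "pt Z"] in_B(1) by simp
qed

end

section \<open>Counting incidences of tangents and subplane points\<close>

lemma sum_card_inter_eq_sum_card_incident:
  assumes "finite T" "finite B"
  shows "(\<Sum>L\<in>T. card (L \<inter> B)) = (\<Sum>P\<in>B. card {L \<in> T. P \<in> L})"
proof -
  have "(\<Sum>L\<in>T. card (L \<inter> B)) = (\<Sum>L\<in>T. \<Sum>P\<in>B. of_bool (P \<in> L))"
    using assms(2) by (simp add: Int_commute)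
  also have "\<dots> = (\<Sum>P\<in>B. \<Sum>L\<in>T. of_bool (P \<in> L))"
    by (rule sum.swap)
  also have "\<dots> = (\<Sum>P\<in>B. card {L \<in> T. P \<in> L})"
    using assms(1) by (simp add: Collect_conj_eq Int_commute)
  finally show ?thesis .
qed

context finite_conic
begin

lemma sum_card_tangent_inter_le:
  assumes "B \<subseteq> pg_points"
  shows "(\<Sum>L \<in> {L. tangent_line C L}. card (L \<inter> B)) \<le> card (C \<inter> B) + 2 * card (external_points C \<inter> B)"
proof -
  have "(\<Sum>L \<in> {L. tangent_line C L}. card (L \<inter> B)) = (\<Sum>P\<in>B. card {L. tangent_line C L \<and> P \<in> L})"
    using sum_card_inter_eq_sum_card_incident[of "{L. tangent_line C L}" B] by simp
  also have "\<dots> \<le> (\<Sum>P\<in>B. of_bool (P \<in> C) + 2 * of_bool (P \<in> external_points C))"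
  proof (rule sum_mono)
    fix P
    assume "P \<in> B"
    with assms have "P \<in> pg_points"
      by blast
    then show "card {L. tangent_line C L \<and> P \<in> L} \<le> of_bool (P \<in> C) + 2 * of_bool (P \<in> external_points C)"
      using card_tangents_through_conic_point card_tangents_through_off_conic
      by (auto simp: external_points_def)
  qed
  also have "\<dots> = card (C \<inter> B) + 2 * card (external_points C \<inter> B)"
    by (simp add: sum.distrib sum_distrib_left[symmetric] Int_commute)
  finally show ?thesis .
qed

lemma card_tangent_inter_subplane_ge:
  assumes sub: "subplane_of_order q B" and card_field: "card (UNIV :: 'a set) = q^2"
    and L: "tangent_line C L"
  shows "1 + of_bool (5 \<le> card (C \<inter> B) \<and> L \<in> polar ` (C \<inter> B)) \<le> card (L \<inter> B)"
proof -
  have "L \<in> pg_lines"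
    using L unfolding tangent_line_def by simp
  then have "L \<inter> B \<noteq> {}"
    by (rule line_meets_subplane[OF sub card_field])
  then have "1 \<le> card (L \<inter> B)"
    by (simp add: Suc_leI card_gt_0_iff)
  moreover have "2 \<le> card (L \<inter> B)" if "5 \<le> card (C \<inter> B)" "L \<in> polar ` (C \<inter> B)"
    using that tangent_is_subplane_line[OF sub] unfolding subplane_line_def by blast
  ultimately show ?thesis
    by (cases "5 \<le> card (C \<inter> B) \<and> L \<in> polar ` (C \<inter> B)") auto
qed

lemma sum_card_tangent_inter_ge:
  assumes sub: "subplane_of_order q B" and card_field: "card (UNIV :: 'a set) = q^2"
  shows "q^2 + 1 + (if 5 \<le> card (C \<inter> B) then card (C \<inter> B) else 0)
    \<le> (\<Sum>L \<in> {L. tangent_line C L}. card (L \<inter> B))"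
proof -
  define T where "T = {L. tangent_line C L}"
  define m where "m = card (C \<inter> B)"
  have "(\<Sum>L\<in>T. 1 + of_bool (5 \<le> m \<and> L \<in> polar ` (C \<inter> B))) \<le> (\<Sum>L\<in>T. card (L \<inter> B))"
    by (rule sum_mono) (use card_tangent_inter_subplane_ge[OF sub card_field] in \<open>simp add: T_def m_def\<close>)
  moreover have "(\<Sum>L\<in>T. of_bool (5 \<le> m \<and> L \<in> polar ` (C \<inter> B))) = (if 5 \<le> m then m else 0)"
  proof -
    have "polar ` (C \<inter> B) \<subseteq> T"
      unfolding T_def tangent_line_iff_polar by blast
    moreover have "inj_on polar (C \<inter> B)"
      using inj_on_subset[OF inj_on_polar] conic_points_subset_pg_points[of k] by (meson Int_lower1 order_trans)
    ultimately show ?thesis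
      unfolding m_def by (simp add: Int_absorb1 card_image)
  qed
  moreover have "q^2 + 1 \<le> card T"
    unfolding T_def card_tangent_lines using card_conic_points_ge card_field by simp
  ultimately show ?thesis
    unfolding T_def m_def sum.distrib by simp
qed

end

theorem mainTheorem18:
  fixes q :: nat and C B :: "('a::{field,finite}) vec3 set set"
  assumes "prime_power q" and "odd q"
    and "card (UNIV :: 'a set) = q ^ 2"
    and "irreducible_conic C"
    and "subplane_of_order q B"
  shows "real (card (external_points C \<inter> B)) \<ge> (real q ^ 2 - 3) / 2"
proof -
  obtain k where "qdet k \<noteq> 0" and C: "C = conic_points k"
    using assms(4) unfolding irreducible_conic_def conic_points_def by blast
  then interpret finite_conic k
    by unfold_locales
  have "q^2 + 1 + (if 5 \<le> card (C \<inter> B) then card (C \<inter> B) else 0)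
      \<le> card (C \<inter> B) + 2 * card (external_points C \<inter> B)"
    using sum_card_tangent_inter_ge[OF assms(5,3)]
      sum_card_tangent_inter_le[OF subplane_subset_pg_points[OF assms(5)]]
    unfolding C by linarith
  then have "q^2 \<le> 2 * card (external_points C \<inter> B) + 3"
    by (auto split: if_splits)
  then have "real (q^2) \<le> real (2 * card (external_points C \<inter> B) + 3)"
    by (simp only: of_nat_le_iff)
  then show ?thesis
    by simp
qed

end
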